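(* Let $d\geq1$, $L\ge 1$ to be chosen, and fix a width $p\geq d+3$. For each $j\in\{1,\ldots,d\}$ and $k\in\{1,\ldots,p\}$ let $\{B_{jkr}:r\geq1\}$ be a set of basis functions. Let $\sigma:\mathbb{R}\to\mathbb{R}$ be a non-affine Lipschitz continuous function which is continuously differentiable at at least one point, with nonzero derivative at that point. For $L\geq1$, integers $q_{jk}\geq1$, real numbers $c_{jkr}$, vectors $W_k^{(l)}\in\mathbb{R}^p$ ($2\le l\le L$, $1\le k\le p$), output weights $w_k\in\mathbb{R}$ and biases $b_k^{(l)},b\in\mathbb{R}$, define the HDANN1 function on $[0,1]^d$ by $$x_k^{(1)}=\sigma\Big(\sum_{j=1}^d\sum_{r=1}^{q_{jk}}c_{jkr}B_{jkr}(x_j)+b_k^{(1)}\Big),\quad k=1,\ldots,p,$$ $$x_k^{(l)}=\sigma\big({W_k^{(l)}}^{\top}\mathbf{x}^{(l-1)}+b_k^{(l)}\big),\quad k=1,\ldots,p,\ l=2,\ldots,L,$$ where $\mathbf{x}^{(l)}=(x_1^{(l)},\ldots,x_p^{(l)})^\top$, and output $\mathrm{HDANN1}(\mathbf{x})=\sum_{k=1}^p w_kx_k^{(L)}+b$. Then for any continuous $f:[0,1]^d\to\mathbb{R}$ and any $\epsilon>0$ there exist $L\geq1$, $q_{jk}\geq1$, $W_k^{(l)}\in\mathbb{R}^p$, $w_k\in\mathbb{R}$ and $c_{jkr},b_k^{(l)},b\in\mathbb{R}$ such that $$\sup_{\mathbf{x}\in[0,1]^d}|f(\mathbf{x})-\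mathrm{HDANN1}(\mathbf{x})|<\epsilon.$$
   Context: A set $\{B_r:[0,1]\to\mathbb{R}\,|\,r\geq1\}$ of functions is called a set of basis functions if for every continuous $\phi:[0,1]\to\mathbb{R}$ and every $\epsilon>0$ there exist $q\geq1$ and $c_1,\ldots,c_q,c\in\mathbb{R}$ with $\sup_{x\in[0,1]}|\phi(x)-(\sum_{r=1}^q c_rB_r(x)+c)|<\epsilon$. *)

theory Defs
  imports "HOL-Analysis.Analysis"
begin

text \<open>A set of basis functions on [0,1]: the sup-norm approximation property.
  "sup < eps" is written as: some bound delta < eps holds at every point.\<close>
definition basis_functions :: "(nat \<Rightarrow> real \<Rightarrow> real) \<Rightarrow> bool" where
  "basis_functions B \<longleftrightarrow>
     (\<forall>\<phi>. continuous_on {0..1} \<phi> \<longrightarrow>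
        (\<forall>\<epsilon>>0. \<exists>q\<ge>1. \<exists>cs :: nat \<Rightarrow> real. \<exists>c :: real. \<exists>\<delta><\<epsilon>.
           \<forall>x\<in>{0..1}. \<bar>\<phi> x - ((\<Sum>r=1..q. cs r * B r x) + c)\<bar> \<le> \<delta>))"

definition C1_at_point_nonzero_deriv :: "(real \<Rightarrow> real) \<Rightarrow> bool" where
  "C1_at_point_nonzero_deriv \<sigma> \<longleftrightarrow>
     (\<exists>x0 U. open U \<and> x0 \<in> U \<and> (\<forall>x\<in>U. \<sigma> differentiable (at x))
        \<and> isCont (deriv \<sigma>) x0 \<and> deriv \<sigma> x0 \<noteq> 0)"

definition affine_fun :: "(real \<Rightarrow> real) \<Rightarrow> bool" where
  "affine_fun \<sigma> \<longleftrightarrow> (\<exists>a b. \<forall>x. \<sigma> x = a * x + b)"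

definition lipschitz_fun :: "(real \<Rightarrow> real) \<Rightarrow> bool" where
  "lipschitz_fun \<sigma> \<longleftrightarrow> (\<exists>C. \<forall>x y. \<bar>\<sigma> x - \<sigma> y\<bar> \<le> C * \<bar>x - y\<bar>)"

definition unit_cube :: "(real^'d) set" where
  "unit_cube = {x. \<forall>j. 0 \<le> x$j \<and> x$j \<le> 1}"

text \<open>Hidden units x_k^(l) of HDANN1, l = 1..L, k = 1..p.
  B j k r: basis functions; q j k: number of basis terms; c j k r: coefficients;
  W l k i: i-th entry of W_k^(l); bb l k: bias b_k^(l).  Level 0 is unused.\<close>
fun hdann1_hidden ::
  "(real \<Rightarrow> real) \<Rightarrow> ('d \<Rightarrow> nat \<Rightarrow> nat \<Rightarrow> real \<Rightarrow> real) \<Rightarrow> nat \<Rightarrow>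
   ('d \<Rightarrow> nat \<Rightarrow> nat) \<Rightarrow> ('d \<Rightarrow> nat \<Rightarrow> nat \<Rightarrow> real) \<Rightarrow>
   (nat \<Rightarrow> nat \<Rightarrow> nat \<Rightarrow> real) \<Rightarrow> (nat \<Rightarrow> nat \<Rightarrow> real) \<Rightarrow>
   real^'d::finite \<Rightarrow> nat \<Rightarrow> nat \<Rightarrow> real" where
  "hdann1_hidden \<sigma> B p q c W bb x 0 k = 0"
| "hdann1_hidden \<sigma> B p q c W bb x (Suc 0) k =
     \<sigma> ((\<Sum>j\<in>UNIV. \<Sum>r=1..q j k. c j k r * B j k r (x$j)) + bb 1 k)"
| "hdann1_hidden \<sigma> B p q c W bb x (Suc (Suc l)) k =
     \<sigma> ((\<Sum>i=1..p. W (Suc (Suc l)) k i * hdann1_hidden \<sigma> B p q c W bb x (Suc l) i)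
        + bb (Suc (Suc l)) k)"

definition HDANN1 ::
  "(real \<Rightarrow> real) \<Rightarrow> ('d \<Rightarrow> nat \<Rightarrow> nat \<Rightarrow> real \<Rightarrow> real) \<Rightarrow> nat \<Rightarrow> nat \<Rightarrow>
   ('d \<Rightarrow> nat \<Rightarrow> nat) \<Rightarrow> ('d \<Rightarrow> nat \<Rightarrow> nat \<Rightarrow> real) \<Rightarrow>
   (nat \<Rightarrow> nat \<Rightarrow> nat \<Rightarrow> real) \<Rightarrow> (nat \<Rightarrow> nat \<Rightarrow> real) \<Rightarrow> (nat \<Rightarrow> real) \<Rightarrow> real \<Rightarrow>
   real^'d::finite \<Rightarrow> real" where
  "HDANN1 \<sigma> B p L q c W bb w b x =
     (\<Sum>k=1..p. w k * hdann1_hidden \<sigma> B p q c W bb x L k) + b"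

end

theory Submission
  imports Defs
begin

(* First, ridge sums  c + (SUM l. gamma_l * sigma (beta_l . x + theta_l))  are uniformly dense
   in C([0,1]^d). By Stone-Weierstrass it suffices to approximate each exp (a . x), hence every
   continuous function of one variable by shallow sigma-networks on compact intervals. Window
   integrals of sigma are again approximable and differentiate to forward differences, so
   difference quotients in the inner weight yield  t^k  times a k-th forward difference of
   sigma, which is nonzero somewhere because a non-affine Lipschitz function is not a
   polynomial. Thus all monomials, hence all polynomials, are approximable.

   Second, a network of width d + 3 emulates a ridge sum with one layer per term. Near a point
   x0 with sigma'(x0) = d0 /= 0 the map  s |-> (sigma (x0 + h s) - sigma x0) / (h d0)  is
   uniformly close to the identity on bounded sets for small h. So d neurons relay the input
   coordinates through all layers, one neuron evaluates the next ridge term and one accumulates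
   the partial sums, while the first layer produces the required affine functions of x from the
   basis functions. The errors grow only linearly with the depth. *)

section \<open>Shallow networks in one variable\<close>

definition shallow_net :: "(real \<Rightarrow> real) \<Rightarrow> (real \<times> real \<times> real) list \<Rightarrow> real \<Rightarrow> real" where
  "shallow_net \<sigma> xs t = (\<Sum>(c,a,b)\<leftarrow>xs. c * \<sigma> (a * t + b))"

definition shallow_approximable :: "(real \<Rightarrow> real) \<Rightarrow> (real \<Rightarrow> real) \<Rightarrow> bool" where
  "shallow_approximable \<sigma> g \<longleftrightarrow>
     (\<forall>R \<epsilon>. \<epsilon> > 0 \<longrightarrow> (\<exists>xs. \<forall>t. \<bar>t\<bar> \<le> R \<longrightarrow> \<bar>g t - shallow_net \<sigma> xs t\<bar> \<le> \<epsilon>))"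

lemma shallow_net_Nil [simp]: "shallow_net \<sigma> [] t = 0"
  by (simp add: shallow_net_def)

lemma shallow_net_Cons [simp]: "shallow_net \<sigma> ((c,a,b) # xs) t = c * \<sigma> (a * t + b) + shallow_net \<sigma> xs t"
  by (simp add: shallow_net_def)

lemma shallow_net_append: "shallow_net \<sigma> (xs @ ys) t = shallow_net \<sigma> xs t + shallow_net \<sigma> ys t"
  by (simp add: shallow_net_def)

lemma shallow_net_scale: "shallow_net \<sigma> (map (\<lambda>(c,a,b). (k * c, a, b)) xs) t = k * shallow_net \<sigma> xs t"
  by (induction xs) (auto simp: algebra_simps)

lemma shallow_net_affine_arg:
  "shallow_net \<sigma> (map (\<lambda>(c,a',b'). (c, a' * a, a' * b + b')) xs) t = shallow_net \<sigma> xs (a * t + b)"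
  by (induction xs) (auto simp: algebra_simps)

lemma shallow_approximableI:
  assumes "\<And>R \<epsilon>. \<epsilon> > 0 \<Longrightarrow> \<exists>g. shallow_approximable \<sigma> g \<and> (\<forall>t. \<bar>t\<bar> \<le> R \<longrightarrow> \<bar>f t - g t\<bar> \<le> \<epsilon>)"
  shows "shallow_approximable \<sigma> f"
  unfolding shallow_approximable_def
proof (intro allI impI)
  fix R \<epsilon> :: real
  assume "\<epsilon> > 0"
  then obtain g where g: "shallow_approximable \<sigma> g" "\<forall>t. \<bar>t\<bar> \<le> R \<longrightarrow> \<bar>f t - g t\<bar> \<le> \<epsilon>/2"
    using assms[of "\<epsilon>/2"] by auto
  obtain xs where xs: "\<forall>t. \<bar>t\<bar> \<le> R \<longrightarrow> \<bar>g t - shallow_net \<sigma> xs t\<bar> \<le> \<epsilon>/2"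
    using g(1) \<open>\<epsilon> > 0\<close> unfolding shallow_approximable_def by (meson half_gt_zero)
  have "\<bar>f t - shallow_net \<sigma> xs t\<bar> \<le> \<epsilon>" if "\<bar>t\<bar> \<le> R" for t
  proof -
    have "\<bar>f t - g t\<bar> \<le> \<epsilon>/2" "\<bar>g t - shallow_net \<sigma> xs t\<bar> \<le> \<epsilon>/2"
      using g(2) xs that by auto
    then show ?thesis by linarith
  qed
  then show "\<exists>xs. \<forall>t. \<bar>t\<bar> \<le> R \<longrightarrow> \<bar>f t - shallow_net \<sigma> xs t\<bar> \<le> \<epsilon>" by blast
qed

lemma shallow_approximable_net: "shallow_approximable \<sigma> (shallow_net \<sigma> xs)"
  unfolding shallow_approximable_def by (metis abs_zero diff_self less_imp_le)

lemma shallow_approximable_activation: "shallow_approximable \<sigma> \<sigma>"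
  using shallow_approximable_net[of \<sigma> "[(1,1,0)]"] by (simp add: shallow_net_def[abs_def])

lemma shallow_approximable_zero: "shallow_approximable \<sigma> (\<lambda>t. 0)"
  using shallow_approximable_net[of \<sigma> "[]"] by (simp add: shallow_net_def[abs_def])

lemma shallow_approximable_add:
  assumes "shallow_approximable \<sigma> f" "shallow_approximable \<sigma> g"
  shows "shallow_approximable \<sigma> (\<lambda>t. f t + g t)"
  unfolding shallow_approximable_def
proof (intro allI impI)
  fix R \<epsilon> :: real
  assume "\<epsilon> > 0"
  then obtain xs ys where
      xs: "\<forall>t. \<bar>t\<bar> \<le> R \<longrightarrow> \<bar>f t - shallow_net \<sigma> xs t\<bar> \<le> \<epsilon>/2" and
      ys: "\<forall>t. \<bar>t\<bar> \<le> R \<longrightarrow> \<bar>g t - shallow_net \<sigma> ys t\<bar> \<le> \<epsilon>/2"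
    using assms unfolding shallow_approximable_def by (meson half_gt_zero)
  have "\<bar>f t + g t - shallow_net \<sigma> (xs @ ys) t\<bar> \<le> \<epsilon>" if "\<bar>t\<bar> \<le> R" for t
  proof -
    have "\<bar>f t - shallow_net \<sigma> xs t\<bar> \<le> \<epsilon>/2" "\<bar>g t - shallow_net \<sigma> ys t\<bar> \<le> \<epsilon>/2"
      using xs ys that by auto
    then show ?thesis unfolding shallow_net_append by linarith
  qed
  then show "\<exists>zs. \<forall>t. \<bar>t\<bar> \<le> R \<longrightarrow> \<bar>f t + g t - shallow_net \<sigma> zs t\<bar> \<le> \<epsilon>" by blast
qed

lemma shallow_approximable_scale:
  assumes "shallow_approximable \<sigma> f"
  shows "shallow_approximable \<sigma> (\<lambda>t. k * f t)"
  unfolding shallow_approximable_def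
proof (intro allI impI)
  fix R \<epsilon> :: real
  assume "\<epsilon> > 0"
  then have "\<epsilon> / (\<bar>k\<bar> + 1) > 0" by simp
  then obtain xs where xs: "\<forall>t. \<bar>t\<bar> \<le> R \<longrightarrow> \<bar>f t - shallow_net \<sigma> xs t\<bar> \<le> \<epsilon> / (\<bar>k\<bar> + 1)"
    using assms unfolding shallow_approximable_def by blast
  have "\<bar>k * f t - k * shallow_net \<sigma> xs t\<bar> \<le> \<epsilon>" if "\<bar>t\<bar> \<le> R" for t
  proof -
    have "\<bar>k * f t - k * shallow_net \<sigma> xs t\<bar> = \<bar>k\<bar> * \<bar>f t - shallow_net \<sigma> xs t\<bar>"
      by (simp add: abs_mult[symmetric] algebra_simps)
    also have "\<dots> \<le> (\<bar>k\<bar> + 1) * (\<epsilon> / (\<bar>k\<bar> + 1))"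
      using xs that by (intro mult_mono) auto
    finally show ?thesis by simp
  qed
  then show "\<exists>zs. \<forall>t. \<bar>t\<bar> \<le> R \<longrightarrow> \<bar>k * f t - shallow_net \<sigma> zs t\<bar> \<le> \<epsilon>"
    unfolding shallow_net_scale[symmetric] by blast
qed

lemma shallow_approximable_diff:
  assumes "shallow_approximable \<sigma> f" "shallow_approximable \<sigma> g"
  shows "shallow_approximable \<sigma> (\<lambda>t. f t - g t)"
  using shallow_approximable_add[OF assms(1) shallow_approximable_scale[OF assms(2), of "-1"]]
  by simp

lemma shallow_approximable_sum:
  assumes "finite S" "\<And>i. i \<in> S \<Longrightarrow> shallow_approximable \<sigma> (F i)"
  shows "shallow_approximable \<sigma> (\<lambda>t. \<Sum>i\<in>S. F i t)"
  using assms
  by (induction S rule: finite_induct) (simp_all add: shallow_approximable_zero shallow_approximable_add)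

lemma shallow_approximable_affine_arg:
  assumes "shallow_approximable \<sigma> f"
  shows "shallow_approximable \<sigma> (\<lambda>t. f (a * t + b))"
  unfolding shallow_approximable_def
proof (intro allI impI)
  fix R \<epsilon> :: real
  assume "\<epsilon> > 0"
  then obtain xs where xs: "\<forall>t. \<bar>t\<bar> \<le> \<bar>a\<bar> * \<bar>R\<bar> + \<bar>b\<bar> \<longrightarrow> \<bar>f t - shallow_net \<sigma> xs t\<bar> \<le> \<epsilon>"
    using assms unfolding shallow_approximable_def by blast
  have "\<bar>f (a * t + b) - shallow_net \<sigma> (map (\<lambda>(c,a',b'). (c, a' * a, a' * b + b')) xs) t\<bar> \<le> \<epsilon>"
    if "\<bar>t\<bar> \<le> R" for t
  proof -
    have "\<bar>a * t\<bar> \<le> \<bar>a\<bar> * \<bar>R\<bar>" using that by (simp add: abs_mult mult_left_mono)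
    then have "\<bar>a * t + b\<bar> \<le> \<bar>a\<bar> * \<bar>R\<bar> + \<bar>b\<bar>" by linarith
    then show ?thesis using xs by (simp only: shallow_net_affine_arg)
  qed
  then show "\<exists>zs. \<forall>t. \<bar>t\<bar> \<le> R \<longrightarrow> \<bar>f (a * t + b) - shallow_net \<sigma> zs t\<bar> \<le> \<epsilon>"
    by blast
qed

definition window_integral :: "real \<Rightarrow> (real \<Rightarrow> real) \<Rightarrow> real \<Rightarrow> real" where
  "window_integral e g t = integral {t..t+e} g"

definition forward_diff :: "real \<Rightarrow> (real \<Rightarrow> real) \<Rightarrow> real \<Rightarrow> real" where
  "forward_diff e g t = g (t + e) - g t"

lemma has_real_derivative_integral_from:
  assumes "continuous_on UNIV g" "a < x"
  shows "((\<lambda>u. integral {a..u} g) has_real_derivative g x) (at x)"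
proof -
  have "((\<lambda>u. integral {a..u} g) has_real_derivative g x) (at x within {a..x+1})"
    using assms by (intro integral_has_real_derivative) (auto intro: continuous_on_subset)
  moreover have "at x within {a..x+1} = at x"
    using assms by (intro at_within_Icc_at) auto
  ultimately show ?thesis by simp
qed

lemma window_integral_has_derivative:
  assumes g: "continuous_on UNIV g" and e: "e \<ge> 0"
  shows "(window_integral e g has_real_derivative forward_diff e g t) (at t)"
proof -
  define a where "a = t - 1"
  define G where "G u = integral {a..u} g" for u
  have "(G has_real_derivative g t) (at t)"
    unfolding G_def using g by (intro has_real_derivative_integral_from) (auto simp: a_def)
  moreover have "(G has_real_derivative g (t + e)) (at (t + e))"
    unfolding G_def using g e by (intro has_real_derivative_integral_from) (auto simp: a_def)
  then have "((\<lambda>u. G (u + e)) has_real_derivative g (t + e)) (at t)"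
    using DERIV_shift[of G "g (t+e)" t e] by simp
  ultimately have "((\<lambda>u. G (u + e) - G u) has_real_derivative forward_diff e g t) (at t)"
    unfolding forward_diff_def by (intro DERIV_diff)
  then show ?thesis
  proof (rule has_field_derivative_transform_within_open[of _ _ _ "{a<..}"])
    fix u assume u: "u \<in> {a<..}"
    have "integral {a..u} g + integral {u..u+e} g = integral {a..u+e} g"
      using u e by (intro Henstock_Kurzweil_Integration.integral_combine integrable_continuous_real
          continuous_on_subset[OF g]) auto
    then show "G (u + e) - G u = window_integral e g u"
      unfolding G_def window_integral_def by simp
  qed (auto simp: a_def)
qed

lemma continuous_on_window_integral:
  "continuous_on UNIV g \<Longrightarrow> e \<ge> 0 \<Longrightarrow> continuous_on UNIV (window_integral e g)"
  using window_integral_has_derivative by (meson DERIV_isCont continuous_at_imp_continuous_on)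

lemma continuous_on_forward_diff:
  "continuous_on UNIV g \<Longrightarrow> continuous_on UNIV (forward_diff e g)"
  unfolding forward_diff_def[abs_def]
  by (intro continuous_intros; rule continuous_on_compose2[of UNIV g]; auto intro!: continuous_intros)

lemma forward_diff_has_derivative:
  assumes "\<And>u. (G has_real_derivative G' u) (at u)"
  shows "(forward_diff e G has_real_derivative forward_diff e G' u) (at u)"
proof -
  have "((\<lambda>t. G (t + e)) has_real_derivative G' (u + e)) (at u)"
    using DERIV_shift[of G "G' (u+e)" u e] assms by simp
  then show ?thesis unfolding forward_diff_def[abs_def] by (intro DERIV_diff assms)
qed

lemma integral_Riemann_sum_error:
  fixes m :: nat and t h \<eta> :: real and g :: "real \<Rightarrow> real"
  assumes g: "continuous_on UNIV g" and h: "h \<ge> 0"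
    and osc: "\<And>i s. i < m \<Longrightarrow> s \<in> {t+i*h..t+i*h+h} \<Longrightarrow> \<bar>g s - g (t+i*h)\<bar> \<le> \<eta>"
  shows "\<bar>integral {t..t+m*h} g - (\<Sum>i<m. h * g (t+i*h))\<bar> \<le> m * h * \<eta>"
  using osc
proof (induction m)
  case 0
  then show ?case by simp
next
  case (Suc m)
  have IH: "\<bar>integral {t..t+m*h} g - (\<Sum>i<m. h * g (t+i*h))\<bar> \<le> m * h * \<eta>"
    using Suc by auto
  have split: "integral {t..t+m*h} g + integral {t+m*h..t+m*h+h} g = integral {t..t+m*h+h} g"
    using h by (intro Henstock_Kurzweil_Integration.integral_combine integrable_continuous_real
        continuous_on_subset[OF g]) auto
  have "integral {t+m*h..t+m*h+h} (\<lambda>s. g s - g (t+m*h)) = integral {t+m*h..t+m*h+h} g - h * g (t+m*h)"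
    using h by (subst integral_diff) (auto intro: integrable_continuous_real continuous_on_subset[OF g])
  moreover have "norm (integral {t+m*h..t+m*h+h} (\<lambda>s. g s - g (t+m*h))) \<le> \<eta> * ((t+m*h+h) - (t+m*h))"
  proof (rule integral_bound)
    show "continuous_on {t+m*h..t+m*h+h} (\<lambda>s. g s - g (t+m*h))"
      by (intro continuous_on_diff continuous_on_const continuous_on_subset[OF g]) auto
  qed (use h Suc.prems[of m] in auto)
  ultimately have piece: "\<bar>integral {t+m*h..t+m*h+h} g - h * g (t+m*h)\<bar> \<le> \<eta> * h"
    by simp
  have "t + real (Suc m) * h = t+m*h+h"
    by (simp add: algebra_simps)
  then have "integral {t..t + real (Suc m) * h} g - (\<Sum>i<Suc m. h * g (t+i*h))
      = (integral {t..t+m*h} g - (\<Sum>i<m. h * g (t+i*h))) + (integral {t+m*h..t+m*h+h} g - h * g (t+m*h))"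
    using split by (simp add: add.assoc)
  also have "\<bar>\<dots>\<bar> \<le> m * h * \<eta> + \<eta> * h"
    using IH piece by (rule abs_triangle_ineq[THEN order_trans, OF add_mono])
  also have "\<dots> = real (Suc m) * h * \<eta>"
    by (simp add: algebra_simps)
  finally show ?case .
qed

lemma shallow_approximable_window_integral:
  assumes g: "continuous_on UNIV g" and approx: "shallow_approximable \<sigma> g" and e: "e > 0"
  shows "shallow_approximable \<sigma> (window_integral e g)"
proof (rule shallow_approximableI)
  fix R \<epsilon> :: real
  assume \<epsilon>: "\<epsilon> > 0"
  define K where "K = {-\<bar>R\<bar>-1 .. \<bar>R\<bar>+e+1}"
  have "uniformly_continuous_on K g"
    unfolding K_def by (intro compact_uniformly_continuous continuous_on_subset[OF g]) auto
  then obtain d where d: "d > 0" "\<And>x x'. x \<in> K \<Longrightarrow> x' \<in> K \<Longrightarrow> dist x' x < d \<Longrightarrow> dist (g x') (g x) < \<epsilon>/e"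
    unfolding uniformly_continuous_on_def using \<epsilon> e by (metis divide_pos_pos)
  obtain m :: nat where m: "e / d < m" using reals_Archimedean2 by blast
  then have "m > 0" using e d by (metis divide_pos_pos gr0I of_nat_0 order.asym)
  define h where "h = e / m"
  have h: "h > 0" "h < d" "m * h = e"
    using e d m \<open>m > 0\<close> by (auto simp: h_def field_simps)
  show "\<exists>g'. shallow_approximable \<sigma> g' \<and> (\<forall>t. \<bar>t\<bar> \<le> R \<longrightarrow> \<bar>window_integral e g t - g' t\<bar> \<le> \<epsilon>)"
  proof (intro exI conjI allI impI)
    show "shallow_approximable \<sigma> (\<lambda>t. \<Sum>i<m. h * g (t + i * h))"
      using shallow_approximable_affine_arg[OF approx, of 1]
      by (intro shallow_approximable_sum shallow_approximable_scale) auto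
    fix t
    assume t: "\<bar>t\<bar> \<le> R"
    have "\<bar>integral {t..t+m*h} g - (\<Sum>i<m. h * g (t+i*h))\<bar> \<le> m * h * (\<epsilon>/e)"
    proof (rule integral_Riemann_sum_error[OF g less_imp_le[OF h(1)]])
      fix i s
      assume i: "i < m" and s: "s \<in> {t+i*h..t+i*h+h}"
      have "real i * h + h \<le> e"
        using i h by (metis add.commute mult.commute mult_le_cancel_left_pos of_nat_Suc of_nat_le_iff
            Suc_leI distrib_left mult.right_neutral)
      moreover have "0 \<le> real i * h" using h by simp
      ultimately have K: "s \<in> K" "t + i * h \<in> K"
        using t s unfolding K_def atLeastAtMost_iff by (smt (verit))+
      have "dist s (t + i * h) < d" using s h by (auto simp: dist_real_def)
      then show "\<bar>g s - g (t + i * h)\<bar> \<le> \<epsilon>/e"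
        using d(2)[OF K(2) K(1)] by (simp add: dist_real_def)
    qed
    then show "\<bar>window_integral e g t - (\<Sum>i<m. h * g (t + i * h))\<bar> \<le> \<epsilon>"
      using \<open>m * h = e\<close> e by (simp add: window_integral_def)
  qed
qed

lemma linearization_error_bound:
  fixes D D' :: "real \<Rightarrow> real"
  assumes D: "\<And>z. (D has_real_derivative D' z) (at z)"
    and close: "\<And>z. z \<in> {min u v..max u v} \<Longrightarrow> \<bar>D' z - D' u\<bar> \<le> \<eta>"
  shows "\<bar>D v - D u - (v - u) * D' u\<bar> \<le> \<eta> * \<bar>v - u\<bar>"
proof -
  have "norm ((D v - v * D' u) - (D u - u * D' u)) \<le> \<eta> * norm (v - u)"
  proof (rule field_differentiable_bound[of "{min u v..max u v}"])
    fix z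
    assume "z \<in> {min u v..max u v}"
    show "((\<lambda>s. D s - s * D' u) has_field_derivative (D' z - D' u)) (at z within {min u v..max u v})"
      by (intro DERIV_diff has_field_derivative_at_within[OF D] derivative_eq_intros) auto
    show "norm (D' z - D' u) \<le> \<eta>"
      using close \<open>z \<in> _\<close> by simp
  qed auto
  then show ?thesis by (simp add: algebra_simps)
qed

lemma weighted_difference_quotient_error:
  fixes D D' :: "real \<Rightarrow> real"
  assumes D: "\<And>z. (D has_real_derivative D' z) (at z)" and h: "h > 0"
    and close: "\<And>z. z \<in> {min u (u + h * t)..max u (u + h * t)} \<Longrightarrow> \<bar>D' z - D' u\<bar> \<le> \<eta>"
  shows "\<bar>t^(Suc j) * D' u - (1/h) * (t^j * D (u + h * t) - t^j * D u)\<bar> \<le> \<eta> * \<bar>t\<bar>^(Suc j)"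
proof -
  have "\<bar>D (u + h * t) - D u - (u + h * t - u) * D' u\<bar> \<le> \<eta> * \<bar>u + h * t - u\<bar>"
    by (rule linearization_error_bound[OF D close])
  then have lin: "\<bar>D (u + h * t) - D u - h * t * D' u\<bar> \<le> \<eta> * (h * \<bar>t\<bar>)"
    using h by (simp add: abs_mult)
  have "t^(Suc j) * D' u - (1/h) * (t^j * D (u + h * t) - t^j * D u)
      = - (t^j * (D (u + h * t) - D u - h * t * D' u)) / h"
    using h by (simp add: field_simps)
  then have "\<bar>t^(Suc j) * D' u - (1/h) * (t^j * D (u + h * t) - t^j * D u)\<bar>
      = \<bar>t\<bar>^j * \<bar>D (u + h * t) - D u - h * t * D' u\<bar> / h"
    using h by (simp add: abs_mult abs_divide power_abs)
  also have "\<dots> \<le> \<bar>t\<bar>^j * (\<eta> * (h * \<bar>t\<bar>)) / h"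
    using lin h by (intro divide_right_mono mult_left_mono) auto
  also have "\<dots> = \<eta> * \<bar>t\<bar>^(Suc j)" using h by (simp add: field_simps)
  finally show ?thesis .
qed

lemma shallow_approximable_derivative_step:
  fixes D D' :: "real \<Rightarrow> real"
  assumes D: "\<And>u. (D has_real_derivative D' u) (at u)" and D'_cont: "continuous_on UNIV D'"
    and approx: "\<And>a b. shallow_approximable \<sigma> (\<lambda>t. t^j * D (a * t + b))"
  shows "shallow_approximable \<sigma> (\<lambda>t. t^(Suc j) * D' (a * t + b))"
proof (rule shallow_approximableI)
  fix R \<epsilon> :: real
  assume \<epsilon>: "\<epsilon> > 0"
  define R1 where "R1 = \<bar>R\<bar> + 1"
  have R1: "R1 \<ge> 1" by (simp add: R1_def)
  define \<eta> where "\<eta> = \<epsilon> / R1^(Suc j)"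
  have \<eta>: "\<eta> > 0" using \<epsilon> R1 by (simp add: \<eta>_def)
  define K where "K = {-(\<bar>a\<bar> * R1 + \<bar>b\<bar> + 1) .. \<bar>a\<bar> * R1 + \<bar>b\<bar> + 1}"
  have "uniformly_continuous_on K D'"
    unfolding K_def by (intro compact_uniformly_continuous continuous_on_subset[OF D'_cont]) auto
  then obtain d where d: "d > 0" "\<And>x x'. x \<in> K \<Longrightarrow> x' \<in> K \<Longrightarrow> dist x' x < d \<Longrightarrow> dist (D' x') (D' x) < \<eta>"
    unfolding uniformly_continuous_on_def using \<eta> by metis
  define h where "h = min (d / (2 * R1)) (1 / (2 * R1))"
  have h: "h > 0" "h * R1 < d" "h * R1 \<le> 1/2"
    using d R1 by (auto simp: h_def min_def field_simps)
  show "\<exists>g. shallow_approximable \<sigma> g \<and> (\<forall>t. \<bar>t\<bar> \<le> R \<longrightarrow> \<bar>t^(Suc j) * D' (a * t + b) - g t\<bar> \<le> \<epsilon>)"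
  proof (intro exI conjI allI impI)
    show "shallow_approximable \<sigma> (\<lambda>t. (1/h) * (t^j * D ((a + h) * t + b) - t^j * D (a * t + b)))"
      by (intro shallow_approximable_scale shallow_approximable_diff approx)
    fix t :: real
    assume "\<bar>t\<bar> \<le> R"
    then have t: "\<bar>t\<bar> \<le> R1" by (simp add: R1_def)
    define u where "u = a * t + b"
    have ht: "\<bar>h * t\<bar> \<le> h * R1" using t h by (simp add: abs_mult mult_left_mono)
    have "\<bar>a * t\<bar> \<le> \<bar>a\<bar> * R1" using t by (simp add: abs_mult mult_left_mono)
    then have u: "\<bar>u\<bar> \<le> \<bar>a\<bar> * R1 + \<bar>b\<bar>" by (simp add: u_def)
    have "\<bar>t^(Suc j) * D' u - (1/h) * (t^j * D (u + h * t) - t^j * D u)\<bar> \<le> \<eta> * \<bar>t\<bar>^(Suc j)"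
    proof (rule weighted_difference_quotient_error[OF D h(1)])
      fix z
      assume "z \<in> {min u (u + h * t)..max u (u + h * t)}"
      then have "\<bar>z - u\<bar> \<le> h * R1" using ht by (auto simp: min_def max_def split: if_splits)
      then have "z \<in> K" "u \<in> K" "dist z u < d"
        using u h unfolding K_def by (auto simp: abs_le_iff dist_real_def)
      then show "\<bar>D' z - D' u\<bar> \<le> \<eta>" using d(2) by (fastforce simp: dist_real_def)
    qed
    also have "\<dots> \<le> \<eta> * R1^(Suc j)"
      using \<eta> t by (intro mult_left_mono power_mono) auto
    also have "\<dots> = \<epsilon>" using R1 by (simp add: \<eta>_def)
    finally show "\<bar>t^(Suc j) * D' (a * t + b) - (1/h) * (t^j * D ((a + h) * t + b) - t^j * D (a * t + b))\<bar> \<le> \<epsilon>"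
      by (simp add: u_def algebra_simps)
  qed
qed

lemma shallow_approximable_power_from_derivatives:
  fixes \<psi> :: "nat \<Rightarrow> real \<Rightarrow> real"
  assumes deriv: "\<And>j u. j < k \<Longrightarrow> (\<psi> j has_real_derivative \<psi> (Suc j) u) (at u)"
    and cont: "\<And>j. j \<le> k \<Longrightarrow> continuous_on UNIV (\<psi> j)"
    and approx: "shallow_approximable \<sigma> (\<psi> 0)" and nonzero: "\<psi> k b \<noteq> 0"
  shows "shallow_approximable \<sigma> (\<lambda>t. t^k)"
proof -
  have "j \<le> k \<Longrightarrow> shallow_approximable \<sigma> (\<lambda>t. t^j * \<psi> j (a * t + b))" for j a b
  proof (induction j arbitrary: a b)
    case 0
    then show ?case using shallow_approximable_affine_arg[OF approx] by simp
  next
    case (Suc j)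
    then show ?case
      by (intro shallow_approximable_derivative_step[of "\<psi> j"] deriv cont) auto
  qed
  from shallow_approximable_scale[OF this[of k 0 b], of "1 / \<psi> k b"] show ?thesis
    using nonzero by simp
qed

lemma continuous_on_window_integral_funpow:
  "continuous_on UNIV g \<Longrightarrow> e \<ge> 0 \<Longrightarrow> continuous_on UNIV ((window_integral e ^^ m) g)"
  by (induction m) (auto intro: continuous_on_window_integral)

lemma shallow_approximable_window_integral_funpow:
  "continuous_on UNIV g \<Longrightarrow> shallow_approximable \<sigma> g \<Longrightarrow> e > 0 \<Longrightarrow>
    shallow_approximable \<sigma> ((window_integral e ^^ m) g)"
  by (induction m) (auto intro!: shallow_approximable_window_integral continuous_on_window_integral_funpow)

lemma continuous_on_forward_diff_funpow:
  "continuous_on UNIV g \<Longrightarrow> continuous_on UNIV ((forward_diff e ^^ m) g)"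
  by (induction m) (auto intro: continuous_on_forward_diff)

lemma forward_diff_funpow_has_derivative:
  assumes "\<And>u. (G has_real_derivative G' u) (at u)"
  shows "((forward_diff e ^^ m) G has_real_derivative (forward_diff e ^^ m) G' u) (at u)"
  using assms by (induction m arbitrary: u) (simp_all add: forward_diff_has_derivative)

definition seq_diff :: "(nat \<Rightarrow> real) \<Rightarrow> nat \<Rightarrow> real" where
  "seq_diff u n = u (Suc n) - u n"

lemma seq_diff_eq_0_if_bounded:
  assumes "\<And>n. \<bar>u n\<bar> \<le> M" "\<And>n. (seq_diff ^^ m) u n = 0"
  shows "seq_diff u n = 0"
  using assms
proof (induction m arbitrary: u M n)
  case 0
  then show ?case by (simp add: seq_diff_def)
next
  case (Suc m)
  have "\<bar>seq_diff u n\<bar> \<le> 2 * M" for n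
    using Suc.prems(1)[of n] Suc.prems(1)[of "Suc n"] by (simp add: seq_diff_def)
  moreover have "(seq_diff ^^ m) (seq_diff u) n = 0" for n
    using Suc.prems(2)[of n] by (simp add: funpow_Suc_right del: funpow.simps)
  ultimately have second: "seq_diff (seq_diff u) n = 0" for n
    by (rule Suc.IH)
  have const: "seq_diff u n = seq_diff u 0" for n
  proof (induction n)
    case (Suc n)
    then show ?case using second[of n] unfolding seq_diff_def by linarith
  qed simp
  have linear: "u n = u 0 + n * seq_diff u 0" for n
  proof (induction n)
    case (Suc n)
    then show ?case using const[of n] by (simp add: seq_diff_def algebra_simps)
  qed simp
  show ?case
  proof (rule ccontr)
    assume "seq_diff u n \<noteq> 0"
    then have "seq_diff u 0 \<noteq> 0" using const[of n] by simp
    moreover obtain N :: nat where "(2 * M + 1) / \<bar>seq_diff u 0\<bar> < N"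
      using reals_Archimedean2 by blast
    ultimately have "2 * M + 1 < N * \<bar>seq_diff u 0\<bar>" by (simp add: field_simps)
    moreover have "\<bar>u N\<bar> \<le> M" "\<bar>u 0\<bar> \<le> M" using Suc.prems(1) by auto
    ultimately show False using linear[of N] by (simp add: abs_mult)
  qed
qed

lemma forward_diff_funpow_eq_seq_diff_funpow:
  "(forward_diff e ^^ m) g (t + n * e) = (seq_diff ^^ m) (\<lambda>n. g (t + real n * e)) n"
proof (induction m arbitrary: g n)
  case 0
  then show ?case by simp
next
  case (Suc m)
  have "(\<lambda>n. forward_diff e g (t + real n * e)) = seq_diff (\<lambda>n. g (t + real n * e))"
    by (auto simp: forward_diff_def seq_diff_def algebra_simps)
  with Suc.IH[of "forward_diff e g"] show ?case
    by (simp add: funpow_Suc_right del: funpow.simps)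
qed

lemma arith_progression_if_second_diff_zero:
  fixes h :: "real \<Rightarrow> real"
  assumes second_diff: "\<And>t e. e > 0 \<Longrightarrow> h (t + 2 * e) - 2 * h (t + e) + h t = 0" and e: "e > 0"
  shows "h (t + real n * e) = h t + real n * (h (t + e) - h t)"
proof -
  have "h (t + real n * e) = h t + real n * (h (t + e) - h t) \<and>
        h (t + real (Suc n) * e) = h t + real (Suc n) * (h (t + e) - h t)"
  proof (induction n)
    case (Suc n)
    have "h ((t + real n * e) + 2 * e) - 2 * h ((t + real n * e) + e) + h (t + real n * e) = 0"
      using second_diff e by blast
    moreover have "(t + real n * e) + 2 * e = t + real (Suc (Suc n)) * e"
      "(t + real n * e) + e = t + real (Suc n) * e"
      by (simp_all add: algebra_simps)
    ultimately show ?case using Suc by (simp add: algebra_simps)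
  qed simp
  then show ?thesis by blast
qed

lemma affine_if_second_diff_zero:
  fixes \<sigma> :: "real \<Rightarrow> real"
  assumes cont: "continuous_on UNIV \<sigma>"
    and second_diff: "\<And>t e. e > 0 \<Longrightarrow> \<sigma> (t + 2 * e) - 2 * \<sigma> (t + e) + \<sigma> t = 0"
  shows "affine_fun \<sigma>"
proof -
  define h where "h x = \<sigma> x - \<sigma> 0 - x * (\<sigma> 1 - \<sigma> 0)" for x
  have h_second_diff: "h (t + 2 * e) - 2 * h (t + e) + h t = 0" if "e > 0" for t e
    using second_diff[OF that, of t] by (simp add: h_def algebra_simps)
  have h0: "h 0 = 0" and h1: "h 1 = 0" by (simp_all add: h_def)
  have grid: "h (- real M + n / q) = 0" if "q > 0" for M n q :: nat
  proof -
    \<comment> \<open>The progression of step 1/q from -M passes through the zeros 0 and 1 of h.\<close>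
    note progression = arith_progression_if_second_diff_zero[OF h_second_diff, of "1 / real q" "- real M"]
    define \<delta> where "\<delta> = h (- real M + 1 / q) - h (- real M)"
    have "- real M + real (M * q) * (1 / q) = 0" "- real M + real (M * q + q) * (1 / q) = 1"
      using that by (simp_all add: field_simps)
    then have "h (- real M) + real (M * q) * \<delta> = 0" "h (- real M) + real (M * q + q) * \<delta> = 0"
      using progression[of "M * q"] progression[of "M * q + q"] h0 h1 that by (simp_all add: \<delta>_def)
    then have "\<delta> = 0" "h (- real M) = 0"
      using that by (simp_all add: algebra_simps)
    then show ?thesis using progression[of n] that by (simp add: \<delta>_def field_simps)
  qed
  have "h r = 0" if r: "r \<in> \<rat>" for r
  proof -
    obtain i :: int and q :: nat where iq: "r = i / q" "q \<noteq> 0"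
      using r unfolding Rats_eq_int_div_nat by blast
    define M where "M = nat \<lceil>\<bar>r\<bar>\<rceil>"
    have "- real M \<le> r" by (simp add: M_def) linarith
    then have "- real M * q \<le> r * q" using mult_right_mono[of "- real M" r "real q"] by simp
    then have "0 \<le> real_of_int (i + int M * int q)" using iq by (simp add: field_simps)
    then have nonneg: "0 \<le> i + int M * int q" by (simp only: of_int_0_le_iff)
    have "- real M + real (nat (i + int M * int q)) / q = r"
      using iq nonneg by (simp add: field_simps)
    then show ?thesis using grid[of q M "nat (i + int M * int q)"] iq by simp
  qed
  moreover have "closed {x. h x = 0}"
    unfolding h_def by (intro closed_Collect_eq continuous_intros cont[THEN continuous_on_subset]) auto
  ultimately have "closure \<rat> \<subseteq> {x. h x = 0}" by (intro closure_minimal) auto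
  then have "h x = 0" for x using Rats_closure_real by auto
  then have "\<sigma> x = (\<sigma> 1 - \<sigma> 0) * x + \<sigma> 0" for x by (simp add: h_def algebra_simps)
  then show ?thesis unfolding affine_fun_def by blast
qed

lemma forward_diff_funpow_nonzero:
  fixes \<sigma> :: "real \<Rightarrow> real"
  assumes cont: "continuous_on UNIV \<sigma>" and lip: "\<And>x y. \<bar>\<sigma> x - \<sigma> y\<bar> \<le> C * \<bar>x - y\<bar>"
    and nonaffine: "\<not> affine_fun \<sigma>"
  shows "\<exists>e>0. \<exists>b. (forward_diff e ^^ k) \<sigma> b \<noteq> 0"
proof (cases k)
  case 0
  have "\<exists>b. \<sigma> b \<noteq> 0"
    using nonaffine unfolding affine_fun_def by (metis mult_zero_left add_0)
  then show ?thesis using 0 by (auto intro: exI[of _ 1])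
next
  case (Suc m)
  show ?thesis
  proof (rule ccontr)
    assume "\<not> ?thesis"
    then have vanish: "\<And>e b. e > 0 \<Longrightarrow> (forward_diff e ^^ Suc m) \<sigma> b = 0" using Suc by auto
    have "\<sigma> (t + 2 * e) - 2 * \<sigma> (t + e) + \<sigma> t = 0" if e: "e > 0" for t e
    proof -
      \<comment> \<open>The first differences along the progression are bounded (by Lipschitz continuity)
          and their m-th differences vanish, so they are constant.\<close>
      define u where "u n = forward_diff e \<sigma> (t + real n * e)" for n :: nat
      have "\<bar>u n\<bar> \<le> C * e" for n
        using lip[of "t + real n * e + e" "t + real n * e"] e by (simp add: u_def forward_diff_def)
      moreover have "(seq_diff ^^ m) u n = 0" for n
      proof -
        have "(seq_diff ^^ m) u n = (forward_diff e ^^ m) (forward_diff e \<sigma>) (t + real n * e)"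
          unfolding u_def by (rule forward_diff_funpow_eq_seq_diff_funpow[symmetric])
        also have "\<dots> = 0"
          using vanish[OF e] by (simp add: funpow_Suc_right del: funpow.simps)
        finally show ?thesis .
      qed
      ultimately have "seq_diff u 0 = 0" by (rule seq_diff_eq_0_if_bounded)
      then show ?thesis by (simp add: seq_diff_def u_def forward_diff_def algebra_simps)
    qed
    then show False using affine_if_second_diff_zero[OF cont] nonaffine by blast
  qed
qed

lemma shallow_approximable_power:
  fixes \<sigma> :: "real \<Rightarrow> real"
  assumes cont: "continuous_on UNIV \<sigma>" and lip: "\<And>x y. \<bar>\<sigma> x - \<sigma> y\<bar> \<le> C * \<bar>x - y\<bar>"
    and nonaffine: "\<not> affine_fun \<sigma>"
  shows "shallow_approximable \<sigma> (\<lambda>t. t^k)"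
proof -
  obtain e b where e: "e > 0" and nonzero: "(forward_diff e ^^ k) \<sigma> b \<noteq> 0"
    using forward_diff_funpow_nonzero[OF cont lip nonaffine] by blast
  \<comment> \<open>Since the derivative of the window integral is the forward difference, \<open>\<psi> j\<close> is the
      j-th derivative of the shallow-approximable function \<open>\<psi> 0\<close>, and \<open>\<psi> k b \<noteq> 0\<close>.\<close>
  define \<psi> where "\<psi> j = (forward_diff e ^^ j) ((window_integral e ^^ (k - j)) \<sigma>)" for j
  show ?thesis
  proof (rule shallow_approximable_power_from_derivatives[of k \<psi>])
    fix j u
    assume "j < k"
    then have "(window_integral e ^^ (k - j)) \<sigma> = window_integral e ((window_integral e ^^ (k - Suc j)) \<sigma>)"
      by (metis Suc_diff_Suc comp_apply funpow.simps(2))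
    moreover have "\<And>u. (window_integral e ((window_integral e ^^ (k - Suc j)) \<sigma>) has_real_derivative
        forward_diff e ((window_integral e ^^ (k - Suc j)) \<sigma>) u) (at u)"
      using e by (intro window_integral_has_derivative continuous_on_window_integral_funpow cont) auto
    ultimately show "(\<psi> j has_real_derivative \<psi> (Suc j) u) (at u)"
      unfolding \<psi>_def using forward_diff_funpow_has_derivative
      by (simp add: funpow_Suc_right del: funpow.simps)
  next
    show "continuous_on UNIV (\<psi> j)" for j
      unfolding \<psi>_def using e
      by (intro continuous_on_forward_diff_funpow continuous_on_window_integral_funpow cont) auto
    show "shallow_approximable \<sigma> (\<psi> 0)"
      unfolding \<psi>_def using e
      by (simp add: shallow_approximable_window_integral_funpow cont shallow_approximable_activation)
    show "\<psi> k b \<noteq> 0" using nonzero by (simp add: \<psi>_def)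
  qed
qed

lemma shallow_approximable_continuous:
  fixes \<sigma> :: "real \<Rightarrow> real"
  assumes cont: "continuous_on UNIV \<sigma>" and lip: "\<And>x y. \<bar>\<sigma> x - \<sigma> y\<bar> \<le> C * \<bar>x - y\<bar>"
    and nonaffine: "\<not> affine_fun \<sigma>" and g: "continuous_on UNIV g"
  shows "shallow_approximable \<sigma> g"
proof (rule shallow_approximableI)
  fix R \<epsilon> :: real
  assume "\<epsilon> > 0"
  then obtain P where P: "real_polynomial_function P" "\<And>x. x \<in> {-\<bar>R\<bar>..\<bar>R\<bar>} \<Longrightarrow> \<bar>g x - P x\<bar> < \<epsilon>"
    using Stone_Weierstrass_real_polynomial_function[of "{-\<bar>R\<bar>..\<bar>R\<bar>}" g \<epsilon>] g
    by (metis compact_Icc continuous_on_subset subset_UNIV)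
  obtain a n where P_eq: "P = (\<lambda>x. \<Sum>i\<le>n. a i * x^i)"
    using P(1) real_polynomial_function_iff_sum by blast
  show "\<exists>g'. shallow_approximable \<sigma> g' \<and> (\<forall>t. \<bar>t\<bar> \<le> R \<longrightarrow> \<bar>g t - g' t\<bar> \<le> \<epsilon>)"
  proof (intro exI conjI allI impI)
    show "shallow_approximable \<sigma> P"
      unfolding P_eq
      by (intro shallow_approximable_sum shallow_approximable_scale shallow_approximable_power[OF cont lip nonaffine]) auto
    show "\<bar>g t - P t\<bar> \<le> \<epsilon>" if "\<bar>t\<bar> \<le> R" for t
      using P(2)[of t] that by (auto simp: abs_le_iff)
  qed
qed

section \<open>Ridge sums on the unit cube\<close>

definition ridge_sum :: "(real \<Rightarrow> real) \<Rightarrow> (real \<times> (real^'d) \<times> real) list \<Rightarrow> real^'d \<Rightarrow> real" where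
  "ridge_sum \<sigma> ys x = (\<Sum>(\<gamma>,\<beta>,\<theta>)\<leftarrow>ys. \<gamma> * \<sigma> (\<beta> \<bullet> x + \<theta>))"

definition ridge_approximable :: "(real \<Rightarrow> real) \<Rightarrow> (real^'d::finite \<Rightarrow> real) \<Rightarrow> bool" where
  "ridge_approximable \<sigma> g \<longleftrightarrow>
     (\<forall>\<epsilon>>0. \<exists>c ys. \<forall>x\<in>unit_cube. \<bar>g x - (c + ridge_sum \<sigma> ys x)\<bar> \<le> \<epsilon>)"

lemma ridge_sum_append: "ridge_sum \<sigma> (xs @ ys) x = ridge_sum \<sigma> xs x + ridge_sum \<sigma> ys x"
  by (simp add: ridge_sum_def)

lemma ridge_sum_shallow_net:
  "ridge_sum \<sigma> (map (\<lambda>(c,a,b). (c, a *\<^sub>R \<alpha>, b)) xs) x = shallow_net \<sigma> xs (\<alpha> \<bullet> x)"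
  by (induction xs) (auto simp: ridge_sum_def)

lemma ridge_sum_conv_sum:
  "ridge_sum \<sigma> ys x = (\<Sum>l<length ys. fst (ys!l) * \<sigma> (fst (snd (ys!l)) \<bullet> x + snd (snd (ys!l))))"
proof -
  have "ridge_sum \<sigma> ys x = sum_list (map (\<lambda>y. fst y * \<sigma> (fst (snd y) \<bullet> x + snd (snd y))) ys)"
    unfolding ridge_sum_def by (intro arg_cong[where f=sum_list] map_cong) auto
  then show ?thesis
    by (simp add: sum_list_sum_nth atLeast0LessThan)
qed

lemma compact_unit_cube: "compact (unit_cube :: (real^'d::finite) set)"
proof -
  have "unit_cube = cbox (0::real^'d) (vec 1)" by (auto simp: unit_cube_def mem_box_cart)
  then show ?thesis using compact_cbox[of "0::real^'d" "vec 1"] by simp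
qed

lemma ridge_approximable_const: "ridge_approximable \<sigma> (\<lambda>x. c)"
  unfolding ridge_approximable_def by (intro allI impI exI[of _ c] exI[of _ "[]"]) (auto simp: ridge_sum_def)

lemma ridge_approximable_add:
  assumes "ridge_approximable \<sigma> f" "ridge_approximable \<sigma> g"
  shows "ridge_approximable \<sigma> (\<lambda>x. f x + g x)"
  unfolding ridge_approximable_def
proof (intro allI impI)
  fix \<epsilon> :: real
  assume "\<epsilon> > 0"
  then obtain c1 ys1 c2 ys2 where
      f: "\<forall>x\<in>unit_cube. \<bar>f x - (c1 + ridge_sum \<sigma> ys1 x)\<bar> \<le> \<epsilon>/2" and
      g: "\<forall>x\<in>unit_cube. \<bar>g x - (c2 + ridge_sum \<sigma> ys2 x)\<bar> \<le> \<epsilon>/2"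
    using assms unfolding ridge_approximable_def by (meson half_gt_zero)
  have "\<bar>f x + g x - ((c1 + c2) + ridge_sum \<sigma> (ys1 @ ys2) x)\<bar> \<le> \<epsilon>" if "x \<in> unit_cube" for x
  proof -
    have "\<bar>f x - (c1 + ridge_sum \<sigma> ys1 x)\<bar> \<le> \<epsilon>/2" "\<bar>g x - (c2 + ridge_sum \<sigma> ys2 x)\<bar> \<le> \<epsilon>/2"
      using f g that by auto
    then show ?thesis unfolding ridge_sum_append by linarith
  qed
  then show "\<exists>c ys. \<forall>x\<in>unit_cube. \<bar>f x + g x - (c + ridge_sum \<sigma> ys x)\<bar> \<le> \<epsilon>" by blast
qed

lemma ridge_approximable_compose_inner:
  fixes \<sigma> :: "real \<Rightarrow> real" and a :: "real^'d::finite"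
  assumes cont: "continuous_on UNIV \<sigma>" and lip: "\<And>x y. \<bar>\<sigma> x - \<sigma> y\<bar> \<le> C * \<bar>x - y\<bar>"
    and nonaffine: "\<not> affine_fun \<sigma>" and g: "continuous_on UNIV g"
  shows "ridge_approximable \<sigma> (\<lambda>x. g (a \<bullet> x))"
  unfolding ridge_approximable_def
proof (intro allI impI)
  fix \<epsilon> :: real
  assume "\<epsilon> > 0"
  obtain M where M: "\<And>x :: real^'d. x \<in> unit_cube \<Longrightarrow> norm x \<le> M"
    using compact_imp_bounded[OF compact_unit_cube] unfolding bounded_iff by blast
  have "\<bar>a \<bullet> x\<bar> \<le> norm a * M" if "x \<in> unit_cube" for x
    using Cauchy_Schwarz_ineq2[of a x] M[OF that] by (meson mult_left_mono norm_ge_zero order_trans)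
  moreover obtain xs where "\<forall>t. \<bar>t\<bar> \<le> norm a * M \<longrightarrow> \<bar>g t - shallow_net \<sigma> xs t\<bar> \<le> \<epsilon>"
    using shallow_approximable_continuous[OF cont lip nonaffine g] \<open>\<epsilon> > 0\<close>
    unfolding shallow_approximable_def by blast
  ultimately have "\<forall>x\<in>unit_cube. \<bar>g (a \<bullet> x) - (0 + ridge_sum \<sigma> (map (\<lambda>(c,b,d). (c, b *\<^sub>R a, d)) xs) x)\<bar> \<le> \<epsilon>"
    by (simp add: ridge_sum_shallow_net)
  then show "\<exists>c ys. \<forall>x\<in>unit_cube. \<bar>g (a \<bullet> x) - (c + ridge_sum \<sigma> ys x)\<bar> \<le> \<epsilon>" by blast
qed

inductive exp_sum :: "(real^'d::finite \<Rightarrow> real) \<Rightarrow> bool" where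
  const: "exp_sum (\<lambda>x. c)"
| exp: "exp_sum (\<lambda>x. c * exp (a \<bullet> x))"
| add: "exp_sum f \<Longrightarrow> exp_sum g \<Longrightarrow> exp_sum (\<lambda>x. f x + g x)"

lemma exp_sum_mult_exp: "exp_sum g \<Longrightarrow> exp_sum (\<lambda>x. (c * exp (a \<bullet> x)) * g x)"
proof (induction rule: exp_sum.induct)
  case (const c')
  have "(\<lambda>x. c * exp (a \<bullet> x) * c') = (\<lambda>x. (c * c') * exp (a \<bullet> x))" by (simp add: mult_ac)
  then show ?case by (simp add: exp_sum.exp)
next
  case (exp c' a')
  have "(\<lambda>x. c * exp (a \<bullet> x) * (c' * exp (a' \<bullet> x))) = (\<lambda>x. (c * c') * exp ((a + a') \<bullet> x))"
    by (simp add: inner_add_left exp_add mult_ac)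
  then show ?case by (simp add: exp_sum.exp)
next
  case (add f g)
  then show ?case by (simp add: distrib_left exp_sum.add)
qed

lemma exp_sum_mult: "exp_sum f \<Longrightarrow> exp_sum g \<Longrightarrow> exp_sum (\<lambda>x. f x * g x)"
proof (induction rule: exp_sum.induct)
  case (const c)
  then show ?case using exp_sum_mult_exp[of g c 0] by simp
next
  case (exp c a)
  then show ?case by (rule exp_sum_mult_exp)
next
  case (add f1 f2)
  then show ?case by (simp add: distrib_right exp_sum.add)
qed

lemma continuous_on_exp_sum: "exp_sum f \<Longrightarrow> continuous_on S f"
  by (induction rule: exp_sum.induct) (auto intro!: continuous_intros)

lemma exp_sum_ridge_approximable:
  fixes \<sigma> :: "real \<Rightarrow> real"
  assumes cont: "continuous_on UNIV \<sigma>" and lip: "\<And>x y. \<bar>\<sigma> x - \<sigma> y\<bar> \<le> C * \<bar>x - y\<bar>"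
    and nonaffine: "\<not> affine_fun \<sigma>"
  shows "exp_sum g \<Longrightarrow> ridge_approximable \<sigma> g"
proof (induction rule: exp_sum.induct)
  case (const c)
  then show ?case by (rule ridge_approximable_const)
next
  case (exp c a)
  show ?case
    by (rule ridge_approximable_compose_inner[OF cont lip nonaffine, of "\<lambda>t. c * exp t"])
      (intro continuous_intros)
next
  case (add f g)
  show ?case using add.IH by (rule ridge_approximable_add)
qed

lemma ridge_sum_approximation:
  fixes \<sigma> :: "real \<Rightarrow> real" and f :: "real^'d::finite \<Rightarrow> real"
  assumes cont: "continuous_on UNIV \<sigma>" and lip: "\<And>x y. \<bar>\<sigma> x - \<sigma> y\<bar> \<le> C * \<bar>x - y\<bar>"
    and nonaffine: "\<not> affine_fun \<sigma>" and f: "continuous_on unit_cube f" and \<epsilon>: "\<epsilon> > 0"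
  shows "\<exists>c ys. \<forall>x\<in>unit_cube. \<bar>f x - (c + ridge_sum \<sigma> ys x)\<bar> \<le> \<epsilon>"
proof -
  have "\<exists>g. exp_sum g \<and> (\<forall>x\<in>unit_cube. \<bar>f x - g x\<bar> < \<epsilon>/2)"
  proof (rule Stone_Weierstrass_HOL[of unit_cube exp_sum f "\<epsilon>/2"])
    show "exp_sum f \<and> exp_sum g \<Longrightarrow> exp_sum (\<lambda>x. f x * g x)" for f g
      by (auto intro: exp_sum_mult)
    show "\<exists>g. exp_sum g \<and> g x \<noteq> g y" if xy: "x \<in> unit_cube \<and> y \<in> unit_cube \<and> x \<noteq> y" for x y :: "real^'d"
    proof -
      obtain j where "x $ j \<noteq> y $ j" using xy by (metis vec_eq_iff)
      then have "exp (axis j 1 \<bullet> x) \<noteq> exp (axis j 1 \<bullet> y)" by (simp add: inner_axis')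
      then show ?thesis using exp_sum.exp[of 1 "axis j 1"] by auto
    qed
  qed (use f \<epsilon> compact_unit_cube in \<open>auto intro: exp_sum.intros continuous_on_exp_sum\<close>)
  then obtain g where g: "exp_sum g" "\<forall>x\<in>unit_cube. \<bar>f x - g x\<bar> < \<epsilon>/2" by blast
  obtain c ys where c_ys: "\<forall>x\<in>unit_cube. \<bar>g x - (c + ridge_sum \<sigma> ys x)\<bar> \<le> \<epsilon>/2"
    using exp_sum_ridge_approximable[OF cont lip nonaffine g(1)] \<epsilon>
    unfolding ridge_approximable_def by (meson half_gt_zero)
  have "\<bar>f x - (c + ridge_sum \<sigma> ys x)\<bar> \<le> \<epsilon>" if "x \<in> unit_cube" for x
  proof -
    have "\<bar>f x - g x\<bar> < \<epsilon>/2" "\<bar>g x - (c + ridge_sum \<sigma> ys x)\<bar> \<le> \<epsilon>/2"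
      using g(2) c_ys that by auto
    then show ?thesis by linarith
  qed
  then show ?thesis by blast
qed

section \<open>Emulating a ridge sum by a deep narrow network\<close>

lemma difference_quotient_near_identity:
  fixes \<sigma> :: "real \<Rightarrow> real"
  assumes deriv: "(\<sigma> has_real_derivative d0) (at x0)" and d0: "d0 \<noteq> 0"
    and \<eta>: "\<eta> > 0" and R: "R \<ge> 0"
  shows "\<exists>h>0. h \<le> 1 \<and> (\<forall>s. \<bar>s\<bar> \<le> R \<longrightarrow> \<bar>(\<sigma> (x0 + h * s) - \<sigma> x0) / (h * d0) - s\<bar> \<le> \<eta>)"
proof -
  have lim: "((\<lambda>y. (\<sigma> y - \<sigma> x0) / (y - x0)) \<longlongrightarrow> d0) (at x0)"
    using deriv by (simp add: has_field_derivative_iff)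
  define r where "r = \<eta> * \<bar>d0\<bar> / (R + 1)"
  have r: "r > 0" using \<eta> d0 R by (simp add: r_def)
  obtain \<delta> where \<delta>: "\<delta> > 0"
    and quotient: "\<And>y. y \<noteq> x0 \<and> norm (y - x0) < \<delta> \<Longrightarrow> norm ((\<sigma> y - \<sigma> x0) / (y - x0) - d0) < r"
    using LIM_D[OF lim r] by blast
  define h where "h = min 1 (\<delta> / (R + 1))"
  have h: "h > 0" "h \<le> 1" "h * R < \<delta>"
    using \<delta> R by (auto simp: h_def min_def field_simps)
  have "\<bar>(\<sigma> (x0 + h * s) - \<sigma> x0) / (h * d0) - s\<bar> \<le> \<eta>" if s: "\<bar>s\<bar> \<le> R" for s
  proof (cases "s = 0")
    case False
    have "\<bar>h * s\<bar> \<le> h * R"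
      using h s by (simp add: abs_mult mult_left_mono)
    then have "\<bar>h * s\<bar> < \<delta>"
      using h by linarith
    then have "\<bar>(\<sigma> (x0 + h * s) - \<sigma> x0) / (h * s) - d0\<bar> < r"
      using quotient[of "x0 + h * s"] h False by simp
    moreover have "(\<sigma> (x0 + h * s) - \<sigma> x0) / (h * d0) - s
        = s / d0 * ((\<sigma> (x0 + h * s) - \<sigma> x0) / (h * s) - d0)"
      using h d0 False by (simp add: field_simps)
    ultimately have "\<bar>(\<sigma> (x0 + h * s) - \<sigma> x0) / (h * d0) - s\<bar> \<le> R / \<bar>d0\<bar> * r"
      using s d0 by (simp add: abs_mult abs_divide) (intro mult_mono divide_right_mono; simp)
    also have "\<dots> \<le> \<eta>"
      using \<eta> R d0 by (simp add: r_def field_simps)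
    finally show ?thesis .
  qed (use \<eta> in simp)
  with h show ?thesis by blast
qed

lemma perturbed_iteration_error:
  fixes g :: "real \<Rightarrow> real" and m a b :: "nat \<Rightarrow> real"
  assumes near_id: "\<And>t. \<bar>t\<bar> \<le> R \<Longrightarrow> \<bar>g t - t\<bar> \<le> \<eta>"
    and step: "\<And>l. l < n \<Longrightarrow> m (Suc l) = g (m l) + a l"
    and perturbation: "\<And>l. l < n \<Longrightarrow> \<bar>a l - b l\<bar> \<le> \<delta>"
    and start: "\<bar>m 0 - s\<bar> \<le> e"
    and range: "\<And>l. l < n \<Longrightarrow> \<bar>s + (\<Sum>i<l. b i)\<bar> + e + l * (\<eta> + \<delta>) \<le> R"
  shows "\<bar>m n - (s + (\<Sum>i<n. b i))\<bar> \<le> e + n * (\<eta> + \<delta>)"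
  using step perturbation range
proof (induction n)
  case 0
  then show ?case using start by simp
next
  case (Suc n)
  have IH: "\<bar>m n - (s + (\<Sum>i<n. b i))\<bar> \<le> e + n * (\<eta> + \<delta>)"
    using Suc by simp
  then have "\<bar>m n\<bar> \<le> R" using Suc.prems(3)[of n] by simp
  then have "\<bar>g (m n) - m n\<bar> \<le> \<eta>" by (rule near_id)
  moreover have "\<bar>a n - b n\<bar> \<le> \<delta>" "m (Suc n) = g (m n) + a n"
    using Suc.prems by auto
  ultimately show ?case
    using IH by (simp add: algebra_simps)
qed

lemma first_layer_affine_approx:
  fixes B :: "'d::finite \<Rightarrow> nat \<Rightarrow> nat \<Rightarrow> real \<Rightarrow> real" and A :: "nat \<Rightarrow> real^'d"
  assumes basis: "\<And>j k. k \<in> K \<Longrightarrow> basis_functions (B j k)" and \<delta>: "\<delta> > 0"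
  shows "\<exists>q c b. (\<forall>j. \<forall>k\<in>K. q j k \<ge> 1) \<and> (\<forall>k\<in>K. \<forall>x\<in>unit_cube.
           \<bar>(\<Sum>j\<in>UNIV. \<Sum>r=1..q j k. c j k r * B j k r (x$j)) + b k - (t k + A k \<bullet> x)\<bar> \<le> \<delta>)"
proof -
  define \<delta>' where "\<delta>' = \<delta> / (CARD('d) + 1)"
  have \<delta>': "\<delta>' > 0" "CARD('d) * \<delta>' \<le> \<delta>"
    unfolding \<delta>'_def using \<delta> by (simp_all add: field_simps)
  define good where "good j k z \<longleftrightarrow> fst z \<ge> 1 \<and>
      (\<forall>s\<in>{0..1}. \<bar>(\<Sum>r=1..fst z. fst (snd z) r * B j k r s) + snd (snd z) - A k $ j * s\<bar> \<le> \<delta>')"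
    for j k and z :: "nat \<times> (nat \<Rightarrow> real) \<times> real"
  have good_exists: "\<exists>z. good j k z" if "k \<in> K" for j k
  proof -
    have "continuous_on {0..1} (\<lambda>s. A k $ j * s)" by (intro continuous_intros)
    from basis[OF that, unfolded basis_functions_def, rule_format, OF this \<delta>'(1)]
    obtain Q cs \<kappa> \<epsilon> where Q: "Q \<ge> 1" and "\<epsilon> < \<delta>'"
      and "\<forall>s\<in>{0..1}. \<bar>A k $ j * s - ((\<Sum>r=1..Q. cs r * B j k r s) + \<kappa>)\<bar> \<le> \<epsilon>"
      by blast
    then have "\<bar>(\<Sum>r=1..Q. cs r * B j k r s) + \<kappa> - A k $ j * s\<bar> \<le> \<delta>'" if "s \<in> {0..1}" for s
      using that by fastforce
    with Q show ?thesis unfolding good_def by (intro exI[of _ "(Q, cs, \<kappa>)"]) simp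
  qed
  define Z where "Z j k = (SOME z. good j k z)" for j k
  have Z: "good j k (Z j k)" if "k \<in> K" for j k
    unfolding Z_def using good_exists[OF that] by (rule someI_ex)
  define q where "q j k = fst (Z j k)" for j k
  define c where "c j k = fst (snd (Z j k))" for j k
  define b where "b k = t k + (\<Sum>j\<in>UNIV. snd (snd (Z j k)))" for k
  have "\<bar>(\<Sum>j\<in>UNIV. \<Sum>r=1..q j k. c j k r * B j k r (x$j)) + b k - (t k + A k \<bullet> x)\<bar> \<le> \<delta>"
    if k: "k \<in> K" and x: "x \<in> unit_cube" for k x
  proof -
    have "(\<Sum>j\<in>UNIV. \<Sum>r=1..q j k. c j k r * B j k r (x$j)) + b k - (t k + A k \<bullet> x)
        = (\<Sum>j\<in>UNIV. (\<Sum>r=1..q j k. c j k r * B j k r (x$j)) + snd (snd (Z j k)) - A k $ j * x $ j)"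
      by (simp add: b_def inner_vec_def inner_real_def sum.distrib[symmetric] sum_subtractf[symmetric] add_diff_eq)
    also have "\<bar>\<dots>\<bar> \<le> (\<Sum>j\<in>(UNIV::'d set). \<delta>')"
    proof (rule order_trans[OF sum_abs sum_mono])
      fix j
      have "x $ j \<in> {0..1}" using x by (simp add: unit_cube_def)
      then show "\<bar>(\<Sum>r=1..q j k. c j k r * B j k r (x$j)) + snd (snd (Z j k)) - A k $ j * x $ j\<bar> \<le> \<delta>'"
        using Z[OF k] unfolding q_def c_def good_def by blast
    qed
    finally show ?thesis using \<delta>' by simp
  qed
  moreover have "\<forall>j. \<forall>k\<in>K. q j k \<ge> 1" using Z by (simp add: q_def good_def)
  ultimately show ?thesis by blast
qed

text \<open>The emulation error is at most \<open>2 * \<eta> + N * (\<eta> + G * F) \<le> (N + 2) * (\<eta> + G * F)\<close>, where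
  \<open>F = C * (B\<beta> * D * (N + 1) + 1) * \<eta>\<close> bounds the error of the evaluated ridge terms.\<close>

definition emulation_error_factor :: "nat \<Rightarrow> nat \<Rightarrow> real \<Rightarrow> real \<Rightarrow> real \<Rightarrow> real" where
  "emulation_error_factor D N C G B\<beta> = (N + 2) * (1 + G * C * (B\<beta> * D * (N + 1) + 1))"

text \<open>Neuron \<open>reg j\<close> carries the coordinate \<open>x $ j\<close>, \<open>comp\<close> evaluates the current ridge term and
  \<open>acc\<close> holds the partial ridge sum. All neurons except \<open>comp\<close> store a number \<open>s\<close> as
  \<open>\<sigma> (x0 + h * s)\<close>, which \<open>decode\<close> turns into \<open>relay s \<approx> s\<close>.\<close>

locale hdann1_emulation =
  fixes \<sigma> :: "real \<Rightarrow> real" and x0 d0 h :: real and p :: nat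
    and reg :: "'d::finite \<Rightarrow> nat" and comp acc :: nat
    and \<gamma> :: "nat \<Rightarrow> real" and \<beta> :: "nat \<Rightarrow> real^'d" and \<theta> :: "nat \<Rightarrow> real"
  assumes d0: "d0 \<noteq> 0" and h: "h > 0" and reg_inj: "inj reg"
    and neurons: "reg j \<in> {1..p}" "comp \<in> {1..p}" "acc \<in> {1..p}"
    and distinct: "comp \<noteq> acc" "reg j \<noteq> comp" "reg j \<noteq> acc"
begin

definition decode :: "real \<Rightarrow> real" where
  "decode v = (v - \<sigma> x0) / (h * d0)"

definition relay :: "real \<Rightarrow> real" where
  "relay s = decode (\<sigma> (x0 + h * s))"

text \<open>Layer \<open>l \<ge> 2\<close> evaluates ridge term \<open>l - 1\<close> from the registers of layer \<open>l - 1\<close> and adds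
  term \<open>l - 2\<close>, evaluated in layer \<open>l - 1\<close>, to the accumulator.\<close>

definition hidden_weight :: "nat \<Rightarrow> nat \<Rightarrow> nat \<Rightarrow> real" where
  "hidden_weight l k i =
     (if k = comp then (\<Sum>j\<in>UNIV. if i = reg j then \<beta> (l - 1) $ j / (h * d0) else 0)
      else if k = acc then (if i = acc then 1 / d0 else if i = comp then h * \<gamma> (l - 2) else 0)
      else if i = k then 1 / d0 else 0)"

definition hidden_bias :: "nat \<Rightarrow> nat \<Rightarrow> real" where
  "hidden_bias l k =
     (if k = comp then \<theta> (l - 1) - (\<Sum>j\<in>UNIV. \<beta> (l - 1) $ j) * \<sigma> x0 / (h * d0)
      else x0 - \<sigma> x0 / d0)"

definition first_weight :: "nat \<Rightarrow> real^'d" where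
  "first_weight k = (\<chi> j. if k = reg j then h else 0) + (if k = comp then \<beta> 0 else 0)"

definition first_bias :: "nat \<Rightarrow> real" where
  "first_bias k = (if k = comp then \<theta> 0 else x0)"

definition runs_hidden_layers :: "(nat \<Rightarrow> nat \<Rightarrow> real) \<Rightarrow> bool" where
  "runs_hidden_layers H \<longleftrightarrow> (\<forall>l k. H (Suc (Suc l)) k =
     \<sigma> ((\<Sum>i=1..p. hidden_weight (Suc (Suc l)) k i * H (Suc l) i) + hidden_bias (Suc (Suc l)) k))"

lemma decode_encode: "decode (\<sigma> (x0 + h * s)) = relay s"
  by (simp add: relay_def)

lemma preact_copy:
  assumes "k \<in> {1..p}" "k \<noteq> comp" "k \<noteq> acc"
  shows "(\<Sum>i=1..p. hidden_weight l k i * v i) + hidden_bias l k = x0 + h * decode (v k)"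
proof -
  have "(\<Sum>i=1..p. hidden_weight l k i * v i) = (\<Sum>i=1..p. if i = k then v k / d0 else 0)"
    using assms by (intro sum.cong) (auto simp: hidden_weight_def)
  also have "\<dots> = v k / d0" using assms(1) by simp
  finally have weighted_sum: "(\<Sum>i=1..p. hidden_weight l k i * v i) = v k / d0" .
  have bias: "hidden_bias l k = x0 - \<sigma> x0 / d0"
    using assms by (simp add: hidden_bias_def)
  show ?thesis
    unfolding weighted_sum bias using d0 h by (simp add: decode_def field_simps)
qed

lemma preact_comp:
  "(\<Sum>i=1..p. hidden_weight l comp i * v i) + hidden_bias l comp
     = \<beta> (l - 1) \<bullet> (\<chi> j. decode (v (reg j))) + \<theta> (l - 1)"
proof -
  have "(\<Sum>i=1..p. hidden_weight l comp i * v i)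
      = (\<Sum>i=1..p. \<Sum>j\<in>UNIV. if i = reg j then \<beta> (l - 1) $ j / (h * d0) * v i else 0)"
    by (simp add: hidden_weight_def sum_distrib_right mult_delta_left)
  also have "\<dots> = (\<Sum>j\<in>UNIV. \<Sum>i=1..p. if i = reg j then \<beta> (l - 1) $ j / (h * d0) * v i else 0)"
    by (rule sum.swap)
  also have "\<dots> = (\<Sum>j\<in>UNIV. \<beta> (l - 1) $ j / (h * d0) * v (reg j))"
    using neurons(1) by simp
  finally have weighted_sum: "(\<Sum>i=1..p. hidden_weight l comp i * v i)
      = (\<Sum>j\<in>UNIV. \<beta> (l - 1) $ j / (h * d0) * v (reg j))" .
  have "\<beta> (l - 1) \<bullet> (\<chi> j. decode (v (reg j)))
      = (\<Sum>j\<in>UNIV. \<beta> (l - 1) $ j / (h * d0) * v (reg j) - \<beta> (l - 1) $ j * \<sigma> x0 / (h * d0))"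
    unfolding inner_vec_def
    by (rule sum.cong) (simp_all add: decode_def diff_divide_distrib right_diff_distrib)
  also have "\<dots> = (\<Sum>j\<in>UNIV. \<beta> (l - 1) $ j / (h * d0) * v (reg j))
      - (\<Sum>j\<in>UNIV. \<beta> (l - 1) $ j) * \<sigma> x0 / (h * d0)"
    by (simp add: sum_subtractf sum_distrib_right sum_divide_distrib)
  finally show ?thesis
    unfolding weighted_sum by (simp add: hidden_bias_def)
qed

lemma preact_acc:
  "(\<Sum>i=1..p. hidden_weight l acc i * v i) + hidden_bias l acc
     = x0 + h * (decode (v acc) + \<gamma> (l - 2) * v comp)"
proof -
  have "(\<Sum>i=1..p. hidden_weight l acc i * v i)
      = (\<Sum>i=1..p. (if i = acc then v acc / d0 else 0) + (if i = comp then h * \<gamma> (l - 2) * v comp else 0))"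
    using distinct(1) by (intro sum.cong) (auto simp: hidden_weight_def)
  also have "\<dots> = v acc / d0 + h * \<gamma> (l - 2) * v comp"
    using neurons(2,3) by (simp add: sum.distrib)
  finally have weighted_sum: "(\<Sum>i=1..p. hidden_weight l acc i * v i) = v acc / d0 + h * \<gamma> (l - 2) * v comp" .
  have bias: "hidden_bias l acc = x0 - \<sigma> x0 / d0"
    using distinct(1) by (simp add: hidden_bias_def)
  show ?thesis
    unfolding weighted_sum bias using d0 h by (simp add: decode_def field_simps)
qed

lemma copy_layers:
  assumes runs: "runs_hidden_layers H" and k: "k \<in> {1..p}" "k \<noteq> comp" "k \<noteq> acc"
    and first: "H 1 k = \<sigma> (x0 + h * r)"
  shows "H (Suc l) k = \<sigma> (x0 + h * (relay ^^ l) r)"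
proof (induction l)
  case 0
  then show ?case using first by simp
next
  case (Suc l)
  have "H (Suc (Suc l)) k = \<sigma> (x0 + h * decode (H (Suc l) k))"
    using runs preact_copy[OF k] unfolding runs_hidden_layers_def by simp
  then show ?case
    using Suc.IH by (simp add: decode_encode)
qed

lemma comp_layers:
  assumes runs: "runs_hidden_layers H" and regs: "\<And>j. H (Suc l) (reg j) = \<sigma> (x0 + h * \<rho> $ j)"
  shows "H (Suc (Suc l)) comp = \<sigma> (\<beta> (Suc l) \<bullet> (\<chi> j. relay (\<rho> $ j)) + \<theta> (Suc l))"
  using runs preact_comp unfolding runs_hidden_layers_def by (simp add: regs decode_encode)

lemma acc_layers:
  assumes runs: "runs_hidden_layers H"
    and step: "\<And>l. m (Suc l) = relay (m l) + \<gamma> l * H (Suc l) comp"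
    and first: "H 1 acc = \<sigma> (x0 + h * m 0)"
  shows "H (Suc l) acc = \<sigma> (x0 + h * m l)"
proof (induction l)
  case 0
  then show ?case using first by simp
next
  case (Suc l)
  have "H (Suc (Suc l)) acc = \<sigma> (x0 + h * (decode (H (Suc l) acc) + \<gamma> l * H (Suc l) comp))"
    using runs preact_acc unfolding runs_hidden_layers_def by simp
  then show ?case
    using Suc.IH by (simp add: decode_encode step)
qed

lemma readout:
  "(\<Sum>k=1..p. (if k = acc then 1 / (h * d0) else 0) * v k) + (c - \<sigma> x0 / (h * d0)) = c + decode (v acc)"
  using neurons(3) by (simp add: mult_delta_left decode_def diff_divide_distrib)

lemma first_affine_reg: "first_bias (reg j) + first_weight (reg j) \<bullet> x = x0 + h * x $ j"
proof -
  have "first_weight (reg j) = axis j h"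
    using reg_inj distinct(2) by (auto simp: first_weight_def axis_def vec_eq_iff inj_eq)
  then show ?thesis
    using distinct(2) by (simp add: first_bias_def inner_axis')
qed

lemma first_affine_comp: "first_bias comp + first_weight comp \<bullet> x = \<beta> 0 \<bullet> x + \<theta> 0"
proof -
  have "first_weight comp = \<beta> 0"
    using distinct(2) by (auto simp: first_weight_def vec_eq_iff)
  then show ?thesis by (simp add: first_bias_def)
qed

lemma first_affine_acc: "first_bias acc + first_weight acc \<bullet> x = x0"
proof -
  have "first_weight acc = 0"
    using distinct(1,3) by (auto simp: first_weight_def vec_eq_iff)
  then show ?thesis using distinct(1) by (simp add: first_bias_def)
qed

lemma comp_error:
  fixes x :: "real^'d"
  assumes runs: "runs_hidden_layers H"
    and lip: "\<And>u v. \<bar>\<sigma> u - \<sigma> v\<bar> \<le> C * \<bar>u - v\<bar>" and C: "C \<ge> 0"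
    and \<eta>: "\<eta> \<ge> 0" and relay: "\<And>s. \<bar>s\<bar> \<le> R \<Longrightarrow> \<bar>relay s - s\<bar> \<le> \<eta>"
    and regs: "\<And>j. H 1 (reg j) = \<sigma> (x0 + h * r $ j)" "\<And>j. \<bar>r $ j - x $ j\<bar> \<le> \<eta>"
    and range: "\<And>j. \<bar>x $ j\<bar> + real (Suc l) * \<eta> \<le> R"
  shows "\<bar>H (Suc (Suc l)) comp - \<sigma> (\<beta> (Suc l) \<bullet> x + \<theta> (Suc l))\<bar>
           \<le> C * (norm (\<beta> (Suc l)) * (CARD('d) * (real (Suc (Suc l)) * \<eta>)))"
proof -
  define \<rho> where "\<rho> = (\<chi> j. (relay ^^ Suc l) (r $ j))"
  have "H (Suc l) (reg j) = \<sigma> (x0 + h * (\<chi> j. (relay ^^ l) (r $ j)) $ j)" for j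
    using copy_layers[OF runs neurons(1) distinct(2,3) regs(1)] by simp
  then have "H (Suc (Suc l)) comp
      = \<sigma> (\<beta> (Suc l) \<bullet> (\<chi> j. relay ((\<chi> j. (relay ^^ l) (r $ j)) $ j)) + \<theta> (Suc l))"
    by (rule comp_layers[OF runs])
  then have comp: "H (Suc (Suc l)) comp = \<sigma> (\<beta> (Suc l) \<bullet> \<rho> + \<theta> (Suc l))"
    by (simp add: \<rho>_def)
  have "\<bar>\<rho> $ j - x $ j\<bar> \<le> real (Suc (Suc l)) * \<eta>" for j
  proof -
    have "\<bar>(relay ^^ Suc l) (r $ j) - (x $ j + (\<Sum>i<Suc l. 0))\<bar> \<le> \<eta> + real (Suc l) * (\<eta> + 0)"
    proof (rule perturbed_iteration_error[where g = relay and m = "\<lambda>i. (relay ^^ i) (r $ j)"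
          and a = "\<lambda>_. 0" and b = "\<lambda>_. 0"])
      fix i
      assume "i < Suc l"
      then have "real i * \<eta> \<le> real l * \<eta>"
        using \<eta> by (intro mult_right_mono) auto
      then have "\<eta> + real i * (\<eta> + 0) \<le> real (Suc l) * \<eta>"
        by (simp add: algebra_simps)
      then show "\<bar>x $ j + (\<Sum>i<i. 0)\<bar> + \<eta> + real i * (\<eta> + 0) \<le> R"
        using range[of j] by simp
    qed (use relay regs(2) in simp_all)
    then show ?thesis by (simp add: \<rho>_def algebra_simps)
  qed
  then have "(\<Sum>j\<in>UNIV. \<bar>(\<rho> - x) $ j\<bar>) \<le> (\<Sum>j\<in>(UNIV::'d set). real (Suc (Suc l)) * \<eta>)"
    by (intro sum_mono) simp
  then have "norm (\<rho> - x) \<le> CARD('d) * (real (Suc (Suc l)) * \<eta>)"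
    using norm_le_l1_cart[of "\<rho> - x"] by simp
  then have "\<bar>\<beta> (Suc l) \<bullet> \<rho> - \<beta> (Suc l) \<bullet> x\<bar> \<le> norm (\<beta> (Suc l)) * (CARD('d) * (real (Suc (Suc l)) * \<eta>))"
    using Cauchy_Schwarz_ineq2[of "\<beta> (Suc l)" "\<rho> - x"]
    by (simp add: inner_diff_right) (meson mult_left_mono norm_ge_zero order_trans)
  then have "C * \<bar>\<beta> (Suc l) \<bullet> \<rho> - \<beta> (Suc l) \<bullet> x\<bar>
      \<le> C * (norm (\<beta> (Suc l)) * (CARD('d) * (real (Suc (Suc l)) * \<eta>)))"
    using C by (rule mult_left_mono)
  moreover have "\<bar>H (Suc (Suc l)) comp - \<sigma> (\<beta> (Suc l) \<bullet> x + \<theta> (Suc l))\<bar>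
      \<le> C * \<bar>\<beta> (Suc l) \<bullet> \<rho> - \<beta> (Suc l) \<bullet> x\<bar>"
    unfolding comp using lip[of "\<beta> (Suc l) \<bullet> \<rho> + \<theta> (Suc l)" "\<beta> (Suc l) \<bullet> x + \<theta> (Suc l)"] by simp
  ultimately show ?thesis by linarith
qed

lemma comp_error_uniform:
  fixes x :: "real^'d" and C \<eta> B\<beta> M :: real and N :: nat
  assumes runs: "runs_hidden_layers H" and first: "\<And>k. H 1 k = \<sigma> (pre k)"
    and pre: "\<And>k. k \<in> {1..p} \<Longrightarrow> \<bar>pre k - (first_bias k + first_weight k \<bullet> x)\<bar> \<le> h * \<eta>"
    and h1: "h \<le> 1" and x: "x \<in> unit_cube"
    and lip: "\<And>u v. \<bar>\<sigma> u - \<sigma> v\<bar> \<le> C * \<bar>u - v\<bar>" and C: "C \<ge> 0"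
    and \<eta>: "\<eta> \<ge> 0" and relay: "\<And>s. \<bar>s\<bar> \<le> M + 1 \<Longrightarrow> \<bar>relay s - s\<bar> \<le> \<eta>"
    and \<beta>_bound: "\<And>l. l < N \<Longrightarrow> norm (\<beta> l) \<le> B\<beta>" "B\<beta> \<ge> 0"
    and small: "(N + 1) * \<eta> \<le> 1" and M: "1 \<le> M" and l: "l < N"
  shows "\<bar>H (Suc l) comp - \<sigma> (\<beta> l \<bullet> x + \<theta> l)\<bar> \<le> C * (B\<beta> * CARD('d) * (N + 1) + 1) * \<eta>"
proof (cases l)
  case 0
  have "\<bar>H 1 comp - \<sigma> (\<beta> 0 \<bullet> x + \<theta> 0)\<bar> \<le> C * \<bar>pre comp - (\<beta> 0 \<bullet> x + \<theta> 0)\<bar>"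
    using lip first by simp
  also have "\<dots> \<le> C * (h * \<eta>)"
    using pre[OF neurons(2)] C unfolding first_affine_comp by (rule mult_left_mono)
  also have "\<dots> \<le> C * ((B\<beta> * CARD('d) * (N + 1) + 1) * \<eta>)"
  proof (intro mult_left_mono mult_right_mono)
    have "0 \<le> B\<beta> * CARD('d) * (N + 1)" using \<beta>_bound(2) by simp
    then show "h \<le> B\<beta> * CARD('d) * (N + 1) + 1" using h1 by linarith
  qed (use \<eta> C in auto)
  finally show ?thesis using 0 by (simp add: mult.assoc)
next
  case (Suc l')
  define r where "r = (\<chi> j. (pre (reg j) - x0) / h)"
  have regs: "H 1 (reg j) = \<sigma> (x0 + h * r $ j)" "\<bar>r $ j - x $ j\<bar> \<le> \<eta>" for j
    using pre[OF neurons(1)] first h unfolding first_affine_reg r_def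
    by (simp_all add: abs_divide field_simps)
  have "\<bar>H (Suc l) comp - \<sigma> (\<beta> l \<bullet> x + \<theta> l)\<bar>
      \<le> C * (norm (\<beta> l) * (CARD('d) * (real (Suc (Suc l')) * \<eta>)))"
    unfolding Suc
  proof (rule comp_error[OF runs lip C \<eta> relay regs])
    fix j
    have "\<bar>x $ j\<bar> \<le> 1"
      using x by (simp add: unit_cube_def)
    moreover have "real (Suc l') * \<eta> \<le> (N + 1) * \<eta>"
      using Suc l \<eta> by (intro mult_right_mono) auto
    ultimately show "\<bar>x $ j\<bar> + real (Suc l') * \<eta> \<le> M + 1"
      using small M by linarith
  qed
  also have "\<dots> \<le> C * (B\<beta> * (CARD('d) * ((N + 1) * \<eta>)))"
    using Suc l \<eta> C \<beta>_bound by (intro mult_left_mono mult_mono) auto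
  also have "\<dots> \<le> C * (B\<beta> * CARD('d) * (N + 1) + 1) * \<eta>"
    using C \<eta> by (simp add: algebra_simps)
  finally show ?thesis .
qed

lemma accumulator_error:
  assumes runs: "runs_hidden_layers H"
    and relay: "\<And>s. \<bar>s\<bar> \<le> R \<Longrightarrow> \<bar>relay s - s\<bar> \<le> \<eta>"
    and first: "H 1 acc = \<sigma> (x0 + h * m0)" "\<bar>m0\<bar> \<le> \<eta>"
    and comp: "\<And>l. l < N \<Longrightarrow> \<bar>\<gamma> l * H (Suc l) comp - \<gamma> l * y l\<bar> \<le> \<delta>"
    and range: "\<And>l. l \<le> N \<Longrightarrow> \<bar>\<Sum>i<l. \<gamma> i * y i\<bar> + \<eta> + l * (\<eta> + \<delta>) \<le> R"
  shows "\<bar>decode (H (Suc N) acc) - (\<Sum>l<N. \<gamma> l * y l)\<bar> \<le> 2 * \<eta> + N * (\<eta> + \<delta>)"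
proof -
  define m where "m = rec_nat m0 (\<lambda>l ml. relay ml + \<gamma> l * H (Suc l) comp)"
  have m: "m 0 = m0" "\<And>l. m (Suc l) = relay (m l) + \<gamma> l * H (Suc l) comp"
    by (simp_all add: m_def)
  have "decode (H (Suc N) acc) = relay (m N)"
    using acc_layers[OF runs m(2)] first(1) m(1) by (simp add: decode_encode)
  moreover have "\<bar>m N - (0 + (\<Sum>l<N. \<gamma> l * y l))\<bar> \<le> \<eta> + N * (\<eta> + \<delta>)"
    by (rule perturbed_iteration_error[where g = relay and a = "\<lambda>l. \<gamma> l * H (Suc l) comp"])
      (use relay m first comp range in auto)
  moreover from this have "\<bar>relay (m N) - m N\<bar> \<le> \<eta>"
    using range[of N] by (intro relay) linarith
  ultimately show ?thesis by linarith
qed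

lemma emulation_error:
  fixes x :: "real^'d"
  assumes runs: "runs_hidden_layers H" and first: "\<And>k. H 1 k = \<sigma> (pre k)"
    and pre: "\<And>k. k \<in> {1..p} \<Longrightarrow> \<bar>pre k - (first_bias k + first_weight k \<bullet> x)\<bar> \<le> h * \<eta>"
    and h1: "h \<le> 1" and x: "x \<in> unit_cube"
    and lip: "\<And>u v. \<bar>\<sigma> u - \<sigma> v\<bar> \<le> C * \<bar>u - v\<bar>" and C: "C \<ge> 0"
    and \<eta>: "\<eta> \<ge> 0" and relay: "\<And>s. \<bar>s\<bar> \<le> M + 1 \<Longrightarrow> \<bar>relay s - s\<bar> \<le> \<eta>"
    and \<beta>_bound: "\<And>l. l < N \<Longrightarrow> norm (\<beta> l) \<le> B\<beta>" "B\<beta> \<ge> 0"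
    and \<gamma>_bound: "\<And>l. l < N \<Longrightarrow> \<bar>\<gamma> l\<bar> \<le> G" "G \<ge> 0"
    and target_bound: "\<And>l. l \<le> N \<Longrightarrow> \<bar>\<Sum>i<l. \<gamma> i * \<sigma> (\<beta> i \<bullet> x + \<theta> i)\<bar> \<le> M" "1 \<le> M"
    and small: "emulation_error_factor CARD('d) N C G B\<beta> * \<eta> \<le> 1"
  shows "\<bar>decode (H (Suc N) acc) - (\<Sum>l<N. \<gamma> l * \<sigma> (\<beta> l \<bullet> x + \<theta> l))\<bar>
           \<le> emulation_error_factor CARD('d) N C G B\<beta> * \<eta>"
proof -
  define F where "F = C * (B\<beta> * CARD('d) * (N + 1) + 1) * \<eta>"
  have factor: "emulation_error_factor CARD('d) N C G B\<beta> * \<eta> = (N + 2) * (\<eta> + G * F)"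
    by (simp add: emulation_error_factor_def F_def algebra_simps)
  have "0 \<le> F"
    unfolding F_def using C \<eta> \<beta>_bound(2) by simp
  then have "0 \<le> G * F"
    using \<gamma>_bound(2) by simp
  then have "(N + 1) * (\<eta> + G * F) \<le> (N + 2) * (\<eta> + G * F)"
    using \<eta> by (intro mult_right_mono) auto
  moreover have "(N + 1) * \<eta> \<le> (N + 1) * (\<eta> + G * F)"
    using \<open>0 \<le> G * F\<close> by (intro mult_left_mono) auto
  ultimately have N\<eta>: "(N + 1) * (\<eta> + G * F) \<le> 1" "(N + 1) * \<eta> \<le> 1"
    using small unfolding factor by linarith+
  have comp: "\<bar>H (Suc l) comp - \<sigma> (\<beta> l \<bullet> x + \<theta> l)\<bar> \<le> F" if "l < N" for l
    unfolding F_def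
    by (rule comp_error_uniform[OF runs first pre h1 x lip C \<eta> relay \<beta>_bound N\<eta>(2) target_bound(2) that])
  have "\<bar>decode (H (Suc N) acc) - (\<Sum>l<N. \<gamma> l * \<sigma> (\<beta> l \<bullet> x + \<theta> l))\<bar> \<le> 2 * \<eta> + N * (\<eta> + G * F)"
  proof (rule accumulator_error[OF runs relay])
    show "H 1 acc = \<sigma> (x0 + h * ((pre acc - x0) / h))" "\<bar>(pre acc - x0) / h\<bar> \<le> \<eta>"
      using pre[OF neurons(3)] first h unfolding first_affine_acc by (simp_all add: abs_divide field_simps)
    fix l
    show "\<bar>\<gamma> l * H (Suc l) comp - \<gamma> l * \<sigma> (\<beta> l \<bullet> x + \<theta> l)\<bar> \<le> G * F" if "l < N"
      using comp[OF that] \<gamma>_bound(1)[OF that]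
      by (simp add: right_diff_distrib[symmetric] abs_mult mult_mono)
    show "\<bar>\<Sum>i<l. \<gamma> i * \<sigma> (\<beta> i \<bullet> x + \<theta> i)\<bar> + \<eta> + l * (\<eta> + G * F) \<le> M + 1" if "l \<le> N"
    proof -
      have "l * (\<eta> + G * F) \<le> N * (\<eta> + G * F)"
        using that \<open>0 \<le> G * F\<close> \<eta> by (intro mult_right_mono) auto
      moreover have "(N + 1) * (\<eta> + G * F) = N * (\<eta> + G * F) + (\<eta> + G * F)"
        by (simp add: algebra_simps)
      ultimately have "\<eta> + l * (\<eta> + G * F) \<le> (N + 1) * (\<eta> + G * F)"
        using \<open>0 \<le> G * F\<close> by linarith
      then show ?thesis using target_bound(1)[OF that] N\<eta>(1) by linarith
    qed
  qed
  also have "\<dots> \<le> emulation_error_factor CARD('d) N C G B\<beta> * \<eta>"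
    unfolding factor using \<eta> \<open>0 \<le> G * F\<close> by (simp add: algebra_simps)
  finally show ?thesis .
qed

lemma HDANN1_emulation_error:
  fixes x :: "real^'d" and B :: "'d \<Rightarrow> nat \<Rightarrow> nat \<Rightarrow> real \<Rightarrow> real"
  assumes first: "\<And>k. k \<in> {1..p} \<Longrightarrow>
      \<bar>(\<Sum>j\<in>UNIV. \<Sum>r=1..q j k. c j k r * B j k r (x$j)) + b_first k - (first_bias k + first_weight k \<bullet> x)\<bar> \<le> h * \<eta>"
    and h1: "h \<le> 1" and x: "x \<in> unit_cube"
    and lip: "\<And>u v. \<bar>\<sigma> u - \<sigma> v\<bar> \<le> C * \<bar>u - v\<bar>" and C: "C \<ge> 0"
    and \<eta>: "\<eta> \<ge> 0" and relay: "\<And>s. \<bar>s\<bar> \<le> M + 1 \<Longrightarrow> \<bar>relay s - s\<bar> \<le> \<eta>"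
    and \<beta>_bound: "\<And>l. l < N \<Longrightarrow> norm (\<beta> l) \<le> B\<beta>" "B\<beta> \<ge> 0"
    and \<gamma>_bound: "\<And>l. l < N \<Longrightarrow> \<bar>\<gamma> l\<bar> \<le> G" "G \<ge> 0"
    and target_bound: "\<And>l. l \<le> N \<Longrightarrow> \<bar>\<Sum>i<l. \<gamma> i * \<sigma> (\<beta> i \<bullet> x + \<theta> i)\<bar> \<le> M" "1 \<le> M"
    and small: "emulation_error_factor CARD('d) N C G B\<beta> * \<eta> \<le> 1"
  shows "\<bar>(offset + (\<Sum>l<N. \<gamma> l * \<sigma> (\<beta> l \<bullet> x + \<theta> l)))
           - HDANN1 \<sigma> B p (Suc N) q c hidden_weight (\<lambda>l k. if l = 1 then b_first k else hidden_bias l k)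
               (\<lambda>k. if k = acc then 1 / (h * d0) else 0) (offset - \<sigma> x0 / (h * d0)) x\<bar>
         \<le> emulation_error_factor CARD('d) N C G B\<beta> * \<eta>"
proof -
  define H where "H = hdann1_hidden \<sigma> B p q c hidden_weight (\<lambda>l k. if l = 1 then b_first k else hidden_bias l k) x"
  have runs: "runs_hidden_layers H"
    by (simp add: runs_hidden_layers_def H_def)
  have "H 1 k = \<sigma> ((\<Sum>j\<in>UNIV. \<Sum>r=1..q j k. c j k r * B j k r (x$j)) + b_first k)" for k
    by (simp add: H_def One_nat_def)
  from emulation_error[OF runs this first h1 x lip C \<eta> relay \<beta>_bound \<gamma>_bound target_bound small]
  show ?thesis
    using readout[of "H (Suc N)" offset] by (simp add: HDANN1_def H_def abs_minus_commute)
qed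

lemma exists_HDANN1_emulation:
  fixes B :: "'d \<Rightarrow> nat \<Rightarrow> nat \<Rightarrow> real \<Rightarrow> real"
  assumes basis: "\<And>j k. k \<in> {1..p} \<Longrightarrow> basis_functions (B j k)"
    and h1: "h \<le> 1" and lip: "\<And>u v. \<bar>\<sigma> u - \<sigma> v\<bar> \<le> C * \<bar>u - v\<bar>" and C: "C \<ge> 0"
    and \<eta>: "\<eta> > 0" and relay: "\<And>s. \<bar>s\<bar> \<le> M + 1 \<Longrightarrow> \<bar>relay s - s\<bar> \<le> \<eta>"
    and \<beta>_bound: "\<And>l. l < N \<Longrightarrow> norm (\<beta> l) \<le> B\<beta>" "B\<beta> \<ge> 0"
    and \<gamma>_bound: "\<And>l. l < N \<Longrightarrow> \<bar>\<gamma> l\<bar> \<le> G" "G \<ge> 0"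
    and target_bound: "\<And>l x. l \<le> N \<Longrightarrow> x \<in> unit_cube \<Longrightarrow> \<bar>\<Sum>i<l. \<gamma> i * \<sigma> (\<beta> i \<bullet> x + \<theta> i)\<bar> \<le> M"
      "1 \<le> M"
    and small: "emulation_error_factor CARD('d) N C G B\<beta> * \<eta> \<le> 1"
  shows "\<exists>q :: 'd \<Rightarrow> nat \<Rightarrow> nat. (\<forall>j. \<forall>k\<in>{1..p}. q j k \<ge> 1) \<and> (\<exists>c W bb w b. \<forall>x\<in>unit_cube.
           \<bar>(offset + (\<Sum>l<N. \<gamma> l * \<sigma> (\<beta> l \<bullet> x + \<theta> l))) - HDANN1 \<sigma> B p (Suc N) q c W bb w b x\<bar>
             \<le> emulation_error_factor CARD('d) N C G B\<beta> * \<eta>)"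
proof -
  have "h * \<eta> > 0" using h \<eta> by simp
  from first_layer_affine_approx[where B = B and K = "{1..p}" and t = first_bias and A = first_weight, OF basis this]
  obtain q c b1 where q: "\<forall>j. \<forall>k\<in>{1..p}. q j k \<ge> 1"
    and first: "\<forall>k\<in>{1..p}. \<forall>x\<in>unit_cube.
      \<bar>(\<Sum>j\<in>UNIV. \<Sum>r=1..q j k. c j k r * B j k r (x$j)) + b1 k - (first_bias k + first_weight k \<bullet> x)\<bar> \<le> h * \<eta>"
    by blast
  have "\<bar>(offset + (\<Sum>l<N. \<gamma> l * \<sigma> (\<beta> l \<bullet> x + \<theta> l)))
           - HDANN1 \<sigma> B p (Suc N) q c hidden_weight (\<lambda>l k. if l = 1 then b1 k else hidden_bias l k)
               (\<lambda>k. if k = acc then 1 / (h * d0) else 0) (offset - \<sigma> x0 / (h * d0)) x\<bar>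
         \<le> emulation_error_factor CARD('d) N C G B\<beta> * \<eta>"
    if x: "x \<in> unit_cube" for x
  proof (rule HDANN1_emulation_error[where B = B and q = q and c = c and b_first = b1,
        OF _ h1 x lip C less_imp_le[OF \<eta>] relay \<beta>_bound \<gamma>_bound target_bound(1)[OF _ x] target_bound(2) small])
    show "\<bar>(\<Sum>j\<in>UNIV. \<Sum>r=1..q j k. c j k r * B j k r (x$j)) + b1 k - (first_bias k + first_weight k \<bullet> x)\<bar> \<le> h * \<eta>"
      if "k \<in> {1..p}" for k
      using first x that by blast
  qed
  with q show ?thesis by blast
qed

end

lemma ridge_partial_sums_bounded:
  fixes \<sigma> :: "real \<Rightarrow> real" and \<beta> :: "nat \<Rightarrow> real^'d::finite"
  assumes cont: "continuous_on UNIV \<sigma>"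
  shows "\<exists>M\<ge>1. \<forall>l\<le>N. \<forall>x\<in>unit_cube. \<bar>\<Sum>i<l. \<gamma> i * \<sigma> (\<beta> i \<bullet> x + \<theta> i)\<bar> \<le> M"
proof -
  define S where "S x = (\<Sum>i<N. \<bar>\<gamma> i\<bar> * \<bar>\<sigma> (\<beta> i \<bullet> x + \<theta> i)\<bar>)" for x :: "real^'d"
  have "continuous_on unit_cube (\<lambda>x::real^'d. \<sigma> (\<beta> i \<bullet> x + \<theta> i))" for i
    by (rule continuous_on_compose2[OF cont]) (auto intro!: continuous_intros)
  then have "continuous_on unit_cube S"
    unfolding S_def by (intro continuous_intros) auto
  then have "bounded (S ` unit_cube)"
    by (intro compact_imp_bounded compact_continuous_image compact_unit_cube)
  then obtain M where M: "\<And>x. x \<in> unit_cube \<Longrightarrow> norm (S x) \<le> M"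
    unfolding bounded_iff by blast
  have "\<bar>\<Sum>i<l. \<gamma> i * \<sigma> (\<beta> i \<bullet> x + \<theta> i)\<bar> \<le> max 1 M" if "l \<le> N" "x \<in> unit_cube" for l x
  proof -
    have "\<bar>\<Sum>i<l. \<gamma> i * \<sigma> (\<beta> i \<bullet> x + \<theta> i)\<bar> \<le> (\<Sum>i<l. \<bar>\<gamma> i\<bar> * \<bar>\<sigma> (\<beta> i \<bullet> x + \<theta> i)\<bar>)"
      by (rule order_trans[OF sum_abs]) (simp add: abs_mult)
    also have "\<dots> \<le> S x"
      unfolding S_def using that(1) by (intro sum_mono2) auto
    also have "\<dots> \<le> max 1 M" using M[OF that(2)] by simp
    finally show ?thesis .
  qed
  then show ?thesis by (intro exI[of _ "max 1 M"]) auto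
qed

lemma exists_register_indices: "\<exists>reg :: 'd::finite \<Rightarrow> nat. inj reg \<and> (\<forall>j. reg j \<in> {1..CARD('d)})"
proof -
  obtain g :: "'d \<Rightarrow> nat" where g: "bij_betw g UNIV {0..<CARD('d)}"
    using ex_bij_betw_finite_nat[of "UNIV :: 'd set"] by auto
  then have "g j < CARD('d)" for j
    by (auto simp: bij_betw_def)
  moreover have "inj (\<lambda>j. Suc (g j))"
    using g by (auto simp: bij_betw_def inj_on_def)
  ultimately have "inj (\<lambda>j. Suc (g j))" "\<forall>j. Suc (g j) \<in> {1..CARD('d)}"
    by (auto simp: Suc_le_eq)
  then show ?thesis by blast
qed

lemma emulation_error_factor_ge_1:
  assumes "C \<ge> 0" "G \<ge> 0" "B\<beta> \<ge> 0"
  shows "emulation_error_factor D N C G B\<beta> \<ge> 1"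
proof -
  have "0 \<le> G * C * (B\<beta> * D * (real N + 1) + 1)"
    using assms by simp
  then have "1 * 1 \<le> (real N + 2) * (1 + G * C * (B\<beta> * D * (real N + 1) + 1))"
    by (intro mult_mono) auto
  then show ?thesis
    unfolding emulation_error_factor_def by (simp only: mult_1)
qed

lemma hdann1_approximates_ridge_sum:
  fixes p :: nat and B :: "'d::finite \<Rightarrow> nat \<Rightarrow> nat \<Rightarrow> real \<Rightarrow> real" and \<sigma> :: "real \<Rightarrow> real"
  assumes width: "p \<ge> CARD('d) + 3"
    and basis: "\<And>j k. k \<in> {1..p} \<Longrightarrow> basis_functions (B j k)"
    and cont: "continuous_on UNIV \<sigma>"
    and lip: "\<And>u v. \<bar>\<sigma> u - \<sigma> v\<bar> \<le> C * \<bar>u - v\<bar>" and C: "C \<ge> 0"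
    and deriv: "(\<sigma> has_real_derivative d0) (at x0)" and d0: "d0 \<noteq> 0"
    and tol: "tol > 0"
  shows "\<exists>L\<ge>1. \<exists>q :: 'd \<Rightarrow> nat \<Rightarrow> nat. (\<forall>j. \<forall>k\<in>{1..p}. q j k \<ge> 1) \<and>
           (\<exists>c W bb w b. \<forall>x\<in>unit_cube. \<bar>(offset + ridge_sum \<sigma> ys x) - HDANN1 \<sigma> B p L q c W bb w b x\<bar> \<le> tol)"
proof -
  define N where "N = length ys"
  define \<gamma> where "\<gamma> l = fst (ys ! l)" for l
  define \<beta> where "\<beta> l = fst (snd (ys ! l))" for l
  define \<theta> where "\<theta> l = snd (snd (ys ! l))" for l
  have ridge_sum: "ridge_sum \<sigma> ys x = (\<Sum>l<N. \<gamma> l * \<sigma> (\<beta> l \<bullet> x + \<theta> l))" for x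
    by (simp add: ridge_sum_conv_sum N_def \<gamma>_def \<beta>_def \<theta>_def)
  obtain M where M: "M \<ge> 1" "\<And>l x. l \<le> N \<Longrightarrow> x \<in> unit_cube \<Longrightarrow> \<bar>\<Sum>i<l. \<gamma> i * \<sigma> (\<beta> i \<bullet> x + \<theta> i)\<bar> \<le> M"
    using ridge_partial_sums_bounded[OF cont, where N = N and \<gamma> = \<gamma> and \<beta> = \<beta> and \<theta> = \<theta>] by blast
  define B\<beta> where "B\<beta> = (\<Sum>l<N. norm (\<beta> l))"
  define G where "G = (\<Sum>l<N. \<bar>\<gamma> l\<bar>)"
  have B\<beta>: "\<And>l. l < N \<Longrightarrow> norm (\<beta> l) \<le> B\<beta>" "B\<beta> \<ge> 0"
    unfolding B\<beta>_def by (rule member_le_sum; simp) (simp add: sum_nonneg)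
  have G: "\<And>l. l < N \<Longrightarrow> \<bar>\<gamma> l\<bar> \<le> G" "G \<ge> 0"
    unfolding G_def by (rule member_le_sum; simp) (simp add: sum_nonneg)
  define K where "K = emulation_error_factor CARD('d) N C G B\<beta>"
  define \<eta> where "\<eta> = min tol 1 / K"
  have "K \<ge> 1"
    unfolding K_def using C G(2) B\<beta>(2) by (rule emulation_error_factor_ge_1)
  then have \<eta>: "\<eta> > 0" "K * \<eta> \<le> tol" "K * \<eta> \<le> 1"
    using tol by (simp_all add: \<eta>_def)
  from difference_quotient_near_identity[OF deriv d0 \<eta>(1), of "M + 1"] M(1)
  obtain h where h_range: "h > 0" "h \<le> 1"
    and relay: "\<And>s. \<bar>s\<bar> \<le> M + 1 \<Longrightarrow> \<bar>(\<sigma> (x0 + h * s) - \<sigma> x0) / (h * d0) - s\<bar> \<le> \<eta>"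
    by auto
  obtain reg :: "'d \<Rightarrow> nat" where reg: "inj reg" "\<And>j. reg j \<in> {1..CARD('d)}"
    using exists_register_indices by blast
  have "reg j \<in> {1..p}" "reg j \<noteq> CARD('d) + 1" "reg j \<noteq> CARD('d) + 2" for j
    using reg(2)[of j] width by auto
  with reg(1) interpret hdann1_emulation \<sigma> x0 d0 h p reg "CARD('d) + 1" "CARD('d) + 2" \<gamma> \<beta> \<theta>
    using d0 h_range width by unfold_locales auto
  have "\<And>s. \<bar>s\<bar> \<le> M + 1 \<Longrightarrow> \<bar>relay s - s\<bar> \<le> \<eta>"
    using relay by (simp add: relay_def decode_def)
  from exists_HDANN1_emulation[where B = B and offset = offset,
      OF basis h_range(2) lip C \<eta>(1) this B\<beta> G M(2) M(1) \<eta>(3)[unfolded K_def]]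
  obtain q c W bb w b where "\<forall>j. \<forall>k\<in>{1..p}. q j k \<ge> 1" and "\<forall>x\<in>unit_cube.
      \<bar>(offset + ridge_sum \<sigma> ys x) - HDANN1 \<sigma> B p (Suc N) q c W bb w b x\<bar> \<le> K * \<eta>"
    unfolding ridge_sum K_def by blast
  with \<eta>(2) show ?thesis
    by (intro exI[of _ "Suc N"] exI[of _ q] conjI exI[of _ c] exI[of _ W] exI[of _ bb] exI[of _ w] exI[of _ b])
      (auto intro: order_trans)
qed

lemma lipschitz_funE:
  assumes "lipschitz_fun \<sigma>"
  obtains C where "C \<ge> 0" "\<And>u v. \<bar>\<sigma> u - \<sigma> v\<bar> \<le> C * \<bar>u - v\<bar>"
proof -
  obtain C0 where C0: "\<And>u v. \<bar>\<sigma> u - \<sigma> v\<bar> \<le> C0 * \<bar>u - v\<bar>"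
    using assms unfolding lipschitz_fun_def by blast
  have "\<bar>\<sigma> u - \<sigma> v\<bar> \<le> \<bar>C0\<bar> * \<bar>u - v\<bar>" for u v
    using C0[of u v] abs_ge_self[of C0] by (meson abs_ge_zero mult_right_mono order_trans)
  then show ?thesis by (intro that[of "\<bar>C0\<bar>"]) auto
qed

lemma continuous_on_lipschitz_fun:
  fixes \<sigma> :: "real \<Rightarrow> real" and C :: real
  assumes "\<And>u v. \<bar>\<sigma> u - \<sigma> v\<bar> \<le> C * \<bar>u - v\<bar>" "C \<ge> 0"
  shows "continuous_on UNIV \<sigma>"
  by (rule lipschitz_on_continuous_on[of C]) (auto intro: lipschitz_onI simp: dist_real_def assms)

lemma C1_at_point_nonzero_derivE:
  assumes "C1_at_point_nonzero_deriv \<sigma>"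
  obtains x0 d0 where "d0 \<noteq> 0" "(\<sigma> has_real_derivative d0) (at x0)"
proof -
  obtain x0 U where "open U" "x0 \<in> U" "\<forall>x\<in>U. \<sigma> differentiable (at x)" "deriv \<sigma> x0 \<noteq> 0"
    using assms unfolding C1_at_point_nonzero_deriv_def by blast
  then show ?thesis
    using that DERIV_deriv_iff_real_differentiable by blast
qed

theorem theorem2:
  fixes p :: nat
    and B :: "'d::finite \<Rightarrow> nat \<Rightarrow> nat \<Rightarrow> real \<Rightarrow> real"
    and \<sigma> :: "real \<Rightarrow> real"
    and f :: "real^'d \<Rightarrow> real"
    and \<epsilon> :: real
  assumes width: "p \<ge> CARD('d) + 3"
    and basis: "\<And>j k. k \<in> {1..p} \<Longrightarrow> basis_functions (B j k)"
    and nonaffine: "\<not> affine_fun \<sigma>"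
    and lip: "lipschitz_fun \<sigma>"
    and C1: "C1_at_point_nonzero_deriv \<sigma>"
    and fcont: "continuous_on unit_cube f"
    and eps: "\<epsilon> > 0"
  shows "\<exists>L\<ge>1. \<exists>q :: 'd \<Rightarrow> nat \<Rightarrow> nat. (\<forall>j. \<forall>k\<in>{1..p}. q j k \<ge> 1) \<and>
           (\<exists>c W bb w b. \<exists>\<delta><\<epsilon>. \<forall>x\<in>unit_cube.
              \<bar>f x - HDANN1 \<sigma> B p L q c W bb w b x\<bar> \<le> \<delta>)"
proof -
  obtain C where C: "C \<ge> 0" and lip_C: "\<And>u v. \<bar>\<sigma> u - \<sigma> v\<bar> \<le> C * \<bar>u - v\<bar>"
    using lipschitz_funE[OF lip] by blast
  have cont: "continuous_on UNIV \<sigma>"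
    using lip_C C by (rule continuous_on_lipschitz_fun)
  obtain x0 d0 where d0: "d0 \<noteq> 0" and deriv: "(\<sigma> has_real_derivative d0) (at x0)"
    using C1_at_point_nonzero_derivE[OF C1] by blast
  obtain c0 ys where ridge: "\<forall>x\<in>unit_cube. \<bar>f x - (c0 + ridge_sum \<sigma> ys x)\<bar> \<le> \<epsilon>/2"
    using ridge_sum_approximation[OF cont lip_C nonaffine fcont, of "\<epsilon>/2"] eps by auto
  obtain L q c W bb w b where L: "L \<ge> 1" and q: "\<forall>j. \<forall>k\<in>{1..p}. q j k \<ge> 1"
    and net: "\<forall>x\<in>unit_cube. \<bar>(c0 + ridge_sum \<sigma> ys x) - HDANN1 \<sigma> B p L q c W bb w b x\<bar> \<le> \<epsilon>/4"
    using hdann1_approximates_ridge_sum[where B = B and tol = "\<epsilon>/4" and offset = c0 and ys = ys,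
        OF width basis cont lip_C C deriv d0] eps
    by auto
  have "\<forall>x\<in>unit_cube. \<bar>f x - HDANN1 \<sigma> B p L q c W bb w b x\<bar> \<le> 3 * \<epsilon> / 4"
  proof
    fix x :: "real^'d"
    assume "x \<in> unit_cube"
    then have "\<bar>f x - (c0 + ridge_sum \<sigma> ys x)\<bar> \<le> \<epsilon>/2"
      "\<bar>(c0 + ridge_sum \<sigma> ys x) - HDANN1 \<sigma> B p L q c W bb w b x\<bar> \<le> \<epsilon>/4"
      using ridge net by auto
    then show "\<bar>f x - HDANN1 \<sigma> B p L q c W bb w b x\<bar> \<le> 3 * \<epsilon> / 4" by linarith
  qed
  moreover have "3 * \<epsilon> / 4 < \<epsilon>" using eps by simp
  ultimately show ?thesis using L q by blast
qed

end
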